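(* The set of unitary equivalence classes of irreducible atomic P-modules is in bijection with $W\times S_1$, via $(w,\varphi)\mapsto$ the class of $m_{w,\varphi}$.
   Context: A P-module is $(A,B,\mathfrak H)$ with $\mathfrak H$ finite-dimensional complex Hilbert, $A^*A+B^*B=\mathrm{id}$. Sub-module: subspace invariant under $A,B$; irreducible: no sub-modules besides $\{0\}$ and itself; unitary equivalence: a unitary $U$ with $UA=\tilde AU$, $UB=\tilde BU$. $\mathfrak H=\mathfrak H_{\mathrm{comp}}\oplus\mathfrak H_{\mathrm{res}}$, with $\mathfrak H_{\mathrm{comp}}$ a direct sum of irreducible sub-modules and $\mathfrak H_{\mathrm{res}}$ containing no non-zero sub-module. For a ray $p=x_1x_2\cdots$, $p_n=x_1\cdots x_n$ and $p_n\xi:=X_{x_n}\cdots X_{x_1}\xi$ ($X_0=A,X_1=B$); non-zero $\xi$ is contained in $p$ if $\|p_n\xi\|=\|\xi\|$ for all $n$. $\mathfrak H_{\mathrm{atom}}=\mathrm{span}\{\xi\in\mathfrak H_{\mathrm{comp}}:\xi\text{ contained in a periodic ray}\}$; $\mathfrak H$ is atomic if $\mathfrak H_{\mathrm{atom}}=\mathfrak H_{\mathrm{comp}}$. $W_d$: fixed representatives of prime binary words of length $d$ (not a proper power) modulo cyclic permutation; $W=\bigcup_dW_d$; $S_1$ unit circle. For $w\in W_d$: on the standard basis of $\mathbf C^d$, $A_we_n=e_{n+1}$ (and $B_we_n=0$) if the $n$-th digit of $w$ is $0$, $B_we_n=e_{n+1}$ (and $A_we_n=0$) if it is $1$, indices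 mod $d$; $D_\varphi=\mathrm{diag}(1,\dots,1,\varphi)$; $m_{w,\varphi}=(A_wD_\varphi,B_wD_\varphi,\mathbf C^d)$. *)

theory Defs
  imports Complex_Main "Jordan_Normal_Form.Matrix"
begin

text \<open>A P-module on the Hilbert space C^n (standard inner product) is a triple (A, B, n)
  of complex n x n matrices with A^* A + B^* B = id.  Every finite-dimensional complex
  Hilbert space is isometric to some C^n, so this loses no generality.\<close>

type_synonym pmod = "complex mat \<times> complex mat \<times> nat"

definition adj :: "complex mat \<Rightarrow> complex mat" where
  "adj M = mat (dim_col M) (dim_row M) (\<lambda>(i, j). cnj (M $$ (j, i)))"

definition vnorm :: "complex vec \<Rightarrow> real" where
  "vnorm v = sqrt (\<Sum>i<dim_vec v. (cmod (v $ i))\<^sup>2)"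

definition is_pmodule :: "pmod \<Rightarrow> bool" where
  "is_pmodule M = (case M of (A, B, n) \<Rightarrow>
     A \<in> carrier_mat n n \<and> B \<in> carrier_mat n n \<and> adj A * A + adj B * B = 1\<^sub>m n)"

definition is_subspace :: "nat \<Rightarrow> complex vec set \<Rightarrow> bool" where
  "is_subspace n V = (V \<subseteq> carrier_vec n \<and> 0\<^sub>v n \<in> V \<and>
     (\<forall>u\<in>V. \<forall>v\<in>V. u + v \<in> V) \<and> (\<forall>c. \<forall>v\<in>V. c \<cdot>\<^sub>v v \<in> V))"

definition span_in :: "nat \<Rightarrow> complex vec set \<Rightarrow> complex vec set" where
  "span_in n S = \<Inter>{V. is_subspace n V \<and> S \<subseteq> V}"

definition is_submodule :: "pmod \<Rightarrow> complex vec set \<Rightarrow> bool" where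
  "is_submodule M V = (case M of (A, B, n) \<Rightarrow>
     is_subspace n V \<and> (\<forall>v\<in>V. A *\<^sub>v v \<in> V \<and> B *\<^sub>v v \<in> V))"

definition irreducible_pmod :: "pmod \<Rightarrow> bool" where
  "irreducible_pmod M = (case M of (A, B, n) \<Rightarrow>
     is_pmodule M \<and> n > 0 \<and>
     (\<forall>V. is_submodule M V \<longrightarrow> V = {0\<^sub>v n} \<or> V = carrier_vec n))"

definition irreducible_submodule :: "pmod \<Rightarrow> complex vec set \<Rightarrow> bool" where
  "irreducible_submodule M V = (case M of (A, B, n) \<Rightarrow>
     is_submodule M V \<and> V \<noteq> {0\<^sub>v n} \<and>
     (\<forall>U. is_submodule M U \<longrightarrow> U \<subseteq> V \<longrightarrow> U = {0\<^sub>v n} \<or> U = V))"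

definition H_comp :: "pmod \<Rightarrow> complex vec set" where
  "H_comp M = (case M of (A, B, n) \<Rightarrow>
     span_in n (\<Union>{V. irreducible_submodule M V}))"

text \<open>Rays are infinite binary sequences p : nat \<Rightarrow> bool (False = 0, True = 1), with
  x_1 = p 0, x_2 = p 1, ...; path_apply M p k v = X_{x_k} ... X_{x_1} v.\<close>
fun path_apply :: "pmod \<Rightarrow> (nat \<Rightarrow> bool) \<Rightarrow> nat \<Rightarrow> complex vec \<Rightarrow> complex vec" where
  "path_apply M p 0 v = v"
| "path_apply M p (Suc k) v =
     (case M of (A, B, n) \<Rightarrow> (if p k then B else A) *\<^sub>v path_apply M p k v)"

definition contained_in_ray :: "pmod \<Rightarrow> complex vec \<Rightarrow> (nat \<Rightarrow> bool) \<Rightarrow> bool" where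
  "contained_in_ray M v p = (v \<noteq> 0\<^sub>v (dim_vec v) \<and>
     (\<forall>k. vnorm (path_apply M p k v) = vnorm v))"

definition periodic_ray :: "(nat \<Rightarrow> bool) \<Rightarrow> bool" where
  "periodic_ray p = (\<exists>k>0. \<forall>i. p (i + k) = p i)"

definition H_atom :: "pmod \<Rightarrow> complex vec set" where
  "H_atom M = (case M of (A, B, n) \<Rightarrow>
     span_in n {v \<in> H_comp M. \<exists>p. periodic_ray p \<and> contained_in_ray M v p})"

definition atomic_pmod :: "pmod \<Rightarrow> bool" where
  "atomic_pmod M = (H_atom M = H_comp M)"

definition unitary_mat :: "nat \<Rightarrow> complex mat \<Rightarrow> bool" where
  "unitary_mat n U = (U \<in> carrier_mat n n \<and> adj U * U = 1\<^sub>m n \<and> U * adj U = 1\<^sub>m n)"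

definition unit_equiv :: "pmod \<Rightarrow> pmod \<Rightarrow> bool" where
  "unit_equiv M M' = (case M of (A, B, n) \<Rightarrow> case M' of (A', B', n') \<Rightarrow>
     n = n' \<and> (\<exists>U. unitary_mat n U \<and> U * A = A' * U \<and> U * B = B' * U))"

text \<open>Binary words: bool lists (False = digit 0, True = digit 1).\<close>
definition prime_word :: "bool list \<Rightarrow> bool" where
  "prime_word w = (w \<noteq> [] \<and> \<not> (\<exists>u k. k \<ge> 2 \<and> w = concat (replicate k u)))"

definition cyc_equiv :: "bool list \<Rightarrow> bool list \<Rightarrow> bool" where
  "cyc_equiv w w' = (\<exists>i. rotate i w = w')"

definition representatives :: "bool list set \<Rightarrow> bool" where
  "representatives W = ((\<forall>w\<in>W. prime_word w) \<and>
     (\<forall>v. prime_word v \<longrightarrow> (\<exists>!w. w \<in> W \<and> cyc_equiv w v)))"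

definition S1 :: "complex set" where
  "S1 = {z. cmod z = 1}"

text \<open>A_w, B_w on C^d (0-based indices: e_i \<mapsto> e_{(i+1) mod d}) and D_phi.\<close>
definition A_w :: "bool list \<Rightarrow> complex mat" where
  "A_w w = (let d = length w in
     mat d d (\<lambda>(j, i). if j = Suc i mod d \<and> \<not> w ! i then 1 else 0))"

definition B_w :: "bool list \<Rightarrow> complex mat" where
  "B_w w = (let d = length w in
     mat d d (\<lambda>(j, i). if j = Suc i mod d \<and> w ! i then 1 else 0))"

definition D_phi :: "nat \<Rightarrow> complex \<Rightarrow> complex mat" where
  "D_phi d \<phi> = mat d d (\<lambda>(j, i). if j = i then (if i = d - 1 then \<phi> else 1) else 0)"

definition m_wphi :: "bool list \<Rightarrow> complex \<Rightarrow> pmod" where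
  "m_wphi w \<phi> = (A_w w * D_phi (length w) \<phi>, B_w w * D_phi (length w) \<phi>, length w)"

definition irr_atomic :: "pmod \<Rightarrow> bool" where
  "irr_atomic M = (is_pmodule M \<and> irreducible_pmod M \<and> atomic_pmod M)"

definition ue_rel :: "(pmod \<times> pmod) set" where
  "ue_rel = {(M, M'). irr_atomic M \<and> irr_atomic M' \<and> unit_equiv M M'}"

end

theory Submission
  imports Defs "Jordan_Normal_Form.Spectral_Radius"
begin

text \<open>
  Let M be irreducible and atomic. Atomicity provides a vector xi that stays isometric along a
  periodic ray; shifting the ray we may assume it is w w w ... for a representative w of its
  least period, a prime word of length d. The return map T of one period is a contraction that
  preserves the norms of all T^k xi, hence has an eigenvector zeta for a unimodular eigenvalue phi,
  and zeta again stays on the ray. By the P-module identity, two points of the orbit of zeta whose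
  future rays differ are orthogonal; as w is prime, the first d points are orthonormal. They span
  a sub-module, hence everything, and in this basis A and B are the matrices of m_{w,phi}.

  Conversely m_{w,phi} is irreducible and atomic: following w for one period from position i
  isolates the i-th coordinate, and every basis vector lies on a shift of w w w .... A unitary
  equivalence transports e_0 together with its ray, which forces w' to be a rotation of w (so
  w' = w) and the two monodromies phi, phi' to agree.
\<close>

definition sqnorm :: "complex vec \<Rightarrow> real" where
  "sqnorm v = (\<Sum>i<dim_vec v. (cmod (v $ i))\<^sup>2)"

lemma vnorm_eq_sqrt_sqnorm: "vnorm v = sqrt (sqnorm v)"
  unfolding vnorm_def sqnorm_def by simp

lemma sqnorm_nonneg: "sqnorm v \<ge> 0"
  unfolding sqnorm_def by (intro sum_nonneg) auto

lemma vnorm_eq_iff_sqnorm_eq: "vnorm u = vnorm v \<longleftrightarrow> sqnorm u = sqnorm v"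
  unfolding vnorm_eq_sqrt_sqnorm using sqnorm_nonneg[of u] sqnorm_nonneg[of v] by simp

lemma cscalar_prod_self: "v \<bullet>c v = of_real (sqnorm v)"
proof -
  have "v \<bullet>c v = (\<Sum>i<dim_vec v. v $ i * cnj (v $ i))"
    by (simp add: scalar_prod_def atLeast0LessThan)
  also have "\<dots> = of_real (sqnorm v)"
    unfolding sqnorm_def of_real_sum by (intro sum.cong refl) (simp add: complex_norm_square[symmetric])
  finally show ?thesis .
qed

lemma cscalar_prod_add_right:
  assumes "u \<in> carrier_vec n" "v \<in> carrier_vec n" "w \<in> carrier_vec n"
  shows "u \<bullet>c (v + w) = u \<bullet>c v + u \<bullet>c w"
  using assms by (simp add: conjugate_add_vec[of _ n] scalar_prod_add_distrib[of _ n])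

lemma sqnorm_eq_0_iff:
  assumes "v \<in> carrier_vec n" shows "sqnorm v = 0 \<longleftrightarrow> v = 0\<^sub>v n"
proof
  assume "sqnorm v = 0"
  hence "\<forall>i<dim_vec v. (cmod (v $ i))\<^sup>2 = 0"
    unfolding sqnorm_def by (subst (asm) sum_nonneg_eq_0_iff) auto
  thus "v = 0\<^sub>v n" using assms by (intro eq_vecI) auto
qed (simp add: sqnorm_def)

lemma sqnorm_pos_iff:
  assumes "v \<in> carrier_vec n" shows "sqnorm v > 0 \<longleftrightarrow> v \<noteq> 0\<^sub>v n"
  using sqnorm_eq_0_iff[OF assms] sqnorm_nonneg[of v] by linarith

lemma sqnorm_smult: "sqnorm (a \<cdot>\<^sub>v v) = (cmod a)\<^sup>2 * sqnorm v"
  unfolding sqnorm_def by (simp add: norm_mult power_mult_distrib sum_distrib_left)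

lemma dim_adj [simp]: "dim_row (adj M) = dim_col M" "dim_col (adj M) = dim_row M"
  unfolding adj_def by auto

lemma adj_carrier: "M \<in> carrier_mat n m \<Longrightarrow> adj M \<in> carrier_mat m n"
  unfolding adj_def by auto

lemma adj_index [simp]: "i < dim_col M \<Longrightarrow> j < dim_row M \<Longrightarrow> adj M $$ (i, j) = cnj (M $$ (j, i))"
  unfolding adj_def by simp

lemma adj_adj: "M \<in> carrier_mat n m \<Longrightarrow> adj (adj M) = M"
  unfolding adj_def by (intro eq_matI) auto

lemma adj_one: "adj (1\<^sub>m n) = 1\<^sub>m n"
  unfolding adj_def by (intro eq_matI) auto

lemma adj_mult:
  assumes A: "A \<in> carrier_mat n k" and B: "B \<in> carrier_mat k m"
  shows "adj (A * B) = adj B * adj A"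
proof (rule eq_matI)
  fix i j assume "i < dim_row (adj B * adj A)" "j < dim_col (adj B * adj A)"
  hence i: "i < m" and j: "j < n" using A B by auto
  have "adj (A * B) $$ (i, j) = (\<Sum>l\<in>{0..<k}. cnj (B $$ (l, i)) * cnj (A $$ (j, l)))"
    unfolding adj_def using A B i j by (simp add: scalar_prod_def mult.commute)
  also have "\<dots> = (adj B * adj A) $$ (i, j)"
    using A B i j by (simp add: scalar_prod_def)
  finally show "adj (A * B) $$ (i, j) = (adj B * adj A) $$ (i, j)" .
qed (use A B in \<open>auto simp: adj_def\<close>)

lemma cscalar_prod_mult_mat_vec_left:
  assumes A: "A \<in> carrier_mat nr nc" and u: "u \<in> carrier_vec nc" and v: "v \<in> carrier_vec nr"
  shows "(A *\<^sub>v u) \<bullet>c v = u \<bullet>c (adj A *\<^sub>v v)"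
proof -
  have "(A *\<^sub>v u) \<bullet>c v = (\<Sum>i<nr. \<Sum>k<nc. A $$ (i, k) * u $ k * cnj (v $ i))"
    using A u v by (simp add: scalar_prod_def atLeast0LessThan sum_distrib_right)
  also have "\<dots> = (\<Sum>k<nc. \<Sum>i<nr. A $$ (i, k) * u $ k * cnj (v $ i))"
    by (rule sum.swap)
  also have "\<dots> = u \<bullet>c (adj A *\<^sub>v v)"
    using A u v by (simp add: scalar_prod_def atLeast0LessThan sum_distrib_left mult_ac row_def)
  finally show ?thesis .
qed

lemma sqnorm_unitary:
  assumes U: "unitary_mat n U" and v: "v \<in> carrier_vec n"
  shows "sqnorm (U *\<^sub>v v) = sqnorm v"
proof -
  have Uc: "U \<in> carrier_mat n n" and UU: "adj U * U = 1\<^sub>m n"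
    using U unfolding unitary_mat_def by auto
  have "(U *\<^sub>v v) \<bullet>c (U *\<^sub>v v) = v \<bullet>c ((adj U * U) *\<^sub>v v)"
    using cscalar_prod_mult_mat_vec_left[OF Uc v] Uc v adj_carrier[OF Uc]
    by (simp add: assoc_mult_mat_vec[of _ n n _ n])
  also have "\<dots> = v \<bullet>c v" using UU v by simp
  finally show ?thesis unfolding cscalar_prod_self by simp
qed

lemma unitary_adj: "unitary_mat n U \<Longrightarrow> unitary_mat n (adj U)"
  unfolding unitary_mat_def using adj_adj adj_carrier by metis

lemma unitary_mult:
  assumes U: "unitary_mat n U" and V: "unitary_mat n V"
  shows "unitary_mat n (V * U)"
proof -
  have Uc: "U \<in> carrier_mat n n" and u1: "adj U * U = 1\<^sub>m n" and u2: "U * adj U = 1\<^sub>m n"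
    using U unfolding unitary_mat_def by auto
  have Vc: "V \<in> carrier_mat n n" and v1: "adj V * V = 1\<^sub>m n" and v2: "V * adj V = 1\<^sub>m n"
    using V unfolding unitary_mat_def by auto
  have aU: "adj U \<in> carrier_mat n n" and aV: "adj V \<in> carrier_mat n n"
    using adj_carrier Uc Vc by auto
  have "adj (V * U) * (V * U) = adj U * (adj V * V) * U"
    unfolding adj_mult[OF Vc Uc] using aU aV Vc Uc by (simp add: assoc_mult_mat[of _ n n _ n _ n])
  also have "\<dots> = 1\<^sub>m n" using v1 u1 aU Uc by simp
  finally have 1: "adj (V * U) * (V * U) = 1\<^sub>m n" .
  have "(V * U) * adj (V * U) = V * (U * adj U) * adj V"
    unfolding adj_mult[OF Vc Uc] using aU aV Vc Uc by (simp add: assoc_mult_mat[of _ n n _ n _ n])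
  also have "\<dots> = 1\<^sub>m n" using v2 u2 aV Vc by simp
  finally show ?thesis unfolding unitary_mat_def using 1 Uc Vc by auto
qed

lemma unitary_intertwine_adj:
  assumes U: "unitary_mat n U" and X: "X \<in> carrier_mat n n" and Y: "Y \<in> carrier_mat n n"
    and UX: "U * X = Y * U"
  shows "adj U * Y = X * adj U"
proof -
  have Uc: "U \<in> carrier_mat n n" and u1: "adj U * U = 1\<^sub>m n" and u2: "U * adj U = 1\<^sub>m n"
    using U unfolding unitary_mat_def by auto
  have aU: "adj U \<in> carrier_mat n n" using adj_carrier[OF Uc] .
  have "adj U * Y = adj U * Y * (U * adj U)" using aU Y u2 by simp
  also have "\<dots> = adj U * (Y * U) * adj U"
    using aU Y Uc by (simp add: assoc_mult_mat[of _ n n _ n _ n])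
  also have "\<dots> = adj U * (U * X) * adj U" by (simp only: UX)
  also have "\<dots> = (adj U * U) * X * adj U"
    using aU X Uc by (simp add: assoc_mult_mat[of _ n n _ n _ n])
  also have "\<dots> = X * adj U" using u1 X by simp
  finally show ?thesis .
qed

lemma mat_eqI_mult_vec:
  fixes M N :: "complex mat"
  assumes M: "M \<in> carrier_mat n m" and N: "N \<in> carrier_mat n m"
    and eq: "\<And>v. v \<in> carrier_vec m \<Longrightarrow> M *\<^sub>v v = N *\<^sub>v v"
  shows "M = N"
proof (rule eq_matI)
  fix i j assume ij: "i < dim_row N" "j < dim_col N"
  have "(M *\<^sub>v unit_vec m j) $ i = (N *\<^sub>v unit_vec m j) $ i" using eq[of "unit_vec m j"] by simp
  thus "M $$ (i, j) = N $$ (i, j)" using ij M N by simp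
qed (use M N in auto)

lemma isometry_onto_unitary:
  assumes U: "U \<in> carrier_mat n d" and iso: "adj U * U = 1\<^sub>m d"
    and onto: "\<And>y. y \<in> carrier_vec n \<Longrightarrow> \<exists>x\<in>carrier_vec d. y = U *\<^sub>v x"
  shows "d = n" and "unitary_mat n U"
proof -
  have aU: "adj U \<in> carrier_mat d n" using adj_carrier[OF U] .
  have coiso: "U * adj U = 1\<^sub>m n"
  proof (rule mat_eqI_mult_vec)
    show "U * adj U \<in> carrier_mat n n" using U aU by (rule mult_carrier_mat)
    show "1\<^sub>m n \<in> carrier_mat n n" by (rule one_carrier_mat)
    fix y :: "complex vec" assume "y \<in> carrier_vec n"
    then obtain x where x: "x \<in> carrier_vec d" "y = U *\<^sub>v x" using onto by blast
    have "(U * adj U) *\<^sub>v y = U *\<^sub>v (adj U *\<^sub>v (U *\<^sub>v x))"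
      using x U aU by (simp add: assoc_mult_mat_vec[of _ n d _ n])
    also have "adj U *\<^sub>v (U *\<^sub>v x) = (adj U * U) *\<^sub>v x"
      using x U aU by (simp add: assoc_mult_mat_vec[of _ d n _ d])
    finally show "(U * adj U) *\<^sub>v y = 1\<^sub>m n *\<^sub>v y" using x U iso by simp
  qed
  have UaU: "(U * adj U) $$ (i, i) = (\<Sum>j<d. U $$ (i, j) * cnj (U $$ (i, j)))" if "i < n" for i
    using that U aU by (simp add: scalar_prod_def atLeast0LessThan)
  have aUU: "(adj U * U) $$ (j, j) = (\<Sum>i<n. U $$ (i, j) * cnj (U $$ (i, j)))" if "j < d" for j
    using that U aU by (simp add: scalar_prod_def atLeast0LessThan mult.commute)
  \<comment> \<open>compare traces: both equal the sum of the squared moduli of the entries of U\<close>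
  have "(\<Sum>i<n. (U * adj U) $$ (i, i)) = (\<Sum>i<n. \<Sum>j<d. U $$ (i, j) * cnj (U $$ (i, j)))"
    using UaU by simp
  also have "\<dots> = (\<Sum>j<d. \<Sum>i<n. U $$ (i, j) * cnj (U $$ (i, j)))" by (rule sum.swap)
  also have "\<dots> = (\<Sum>j<d. (adj U * U) $$ (j, j))" using aUU by simp
  finally have "(of_nat n :: complex) = of_nat d" using iso coiso by simp
  thus "d = n" by simp
  thus "unitary_mat n U" unfolding unitary_mat_def using U iso coiso by simp
qed

lemma pmodule_carrier:
  assumes "is_pmodule (A, B, n)" shows "A \<in> carrier_mat n n" "B \<in> carrier_mat n n"
  using assms unfolding is_pmodule_def by auto

lemma pmodule_cscalar_prod:
  assumes pm: "is_pmodule (A, B, n)" and u: "u \<in> carrier_vec n" and v: "v \<in> carrier_vec n"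
  shows "(A *\<^sub>v u) \<bullet>c (A *\<^sub>v v) + (B *\<^sub>v u) \<bullet>c (B *\<^sub>v v) = u \<bullet>c v"
proof -
  have A: "A \<in> carrier_mat n n" and B: "B \<in> carrier_mat n n"
    and AB: "adj A * A + adj B * B = 1\<^sub>m n" using pm unfolding is_pmodule_def by auto
  have AA: "adj A * A \<in> carrier_mat n n" and BB: "adj B * B \<in> carrier_mat n n"
    using adj_carrier[OF A] adj_carrier[OF B] A B by (metis mult_carrier_mat)+
  have "(A *\<^sub>v u) \<bullet>c (A *\<^sub>v v) + (B *\<^sub>v u) \<bullet>c (B *\<^sub>v v)
      = u \<bullet>c ((adj A * A) *\<^sub>v v) + u \<bullet>c ((adj B * B) *\<^sub>v v)"
    using cscalar_prod_mult_mat_vec_left[OF A u] cscalar_prod_mult_mat_vec_left[OF B u] A B v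
    by (simp add: assoc_mult_mat_vec[of _ n n _ n] adj_carrier)
  also have "\<dots> = u \<bullet>c ((adj A * A) *\<^sub>v v + (adj B * B) *\<^sub>v v)"
    using AA BB u v by (simp add: cscalar_prod_add_right[of _ n])
  also have "(adj A * A) *\<^sub>v v + (adj B * B) *\<^sub>v v = (adj A * A + adj B * B) *\<^sub>v v"
    using AA BB v by (simp add: add_mult_distrib_mat_vec[of _ n n])
  finally show ?thesis using AB v by simp
qed

lemma pmodule_sqnorm:
  assumes "is_pmodule (A, B, n)" and "u \<in> carrier_vec n"
  shows "sqnorm (A *\<^sub>v u) + sqnorm (B *\<^sub>v u) = sqnorm u"
  using pmodule_cscalar_prod[OF assms assms(2)] unfolding cscalar_prod_self
  by (metis of_real_add of_real_eq_iff)

section \<open>Contractions with a norm-preserving orbit\<close>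

lemma smult_mat_mult_vec:
  fixes A :: "complex mat"
  assumes "A \<in> carrier_mat nr nc" "v \<in> carrier_vec nc"
  shows "(k \<cdot>\<^sub>m A) *\<^sub>v v = k \<cdot>\<^sub>v (A *\<^sub>v v)"
proof -
  have "dim_col A = nc" "dim_vec v = nc" using assms by auto
  thus ?thesis by (intro eq_vecI) (use assms in \<open>auto simp: scalar_prod_smult_left\<close>)
qed

lemma pow_mat_smult:
  fixes S :: "complex mat"
  assumes S: "S \<in> carrier_mat n n"
  shows "(k \<cdot>\<^sub>m S) ^\<^sub>m m = (k ^ m) \<cdot>\<^sub>m (S ^\<^sub>m m)"
proof (induction m)
  case 0 thus ?case using S by (intro eq_matI) auto
next
  case (Suc m)
  have "(k \<cdot>\<^sub>m S) ^\<^sub>m Suc m = ((k ^ m) \<cdot>\<^sub>m (S ^\<^sub>m m)) * (k \<cdot>\<^sub>m S)" using Suc by simp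
  also have "\<dots> = (k ^ Suc m) \<cdot>\<^sub>m (S ^\<^sub>m Suc m)"
  proof -
    have "S ^\<^sub>m m \<in> carrier_mat n n" using S by simp
    thus ?thesis by (intro eq_matI)
      (use S in \<open>auto simp: scalar_prod_smult_left scalar_prod_smult_right mult_ac\<close>)
  qed
  finally show ?case .
qed

lemma sqnorm_mult_mat_vec_le:
  assumes M: "M \<in> carrier_mat n n" and v: "v \<in> carrier_vec n" and b: "norm_bound M b"
  shows "sqnorm (M *\<^sub>v v) \<le> real n * (b * (\<Sum>j<n. cmod (v $ j)))\<^sup>2"
proof -
  have entry: "cmod ((M *\<^sub>v v) $ i) \<le> b * (\<Sum>j<n. cmod (v $ j))" if i: "i < n" for i
  proof -
    have "(M *\<^sub>v v) $ i = (\<Sum>j<n. M $$ (i, j) * v $ j)"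
      using M v i by (simp add: scalar_prod_def atLeast0LessThan)
    hence "cmod ((M *\<^sub>v v) $ i) \<le> (\<Sum>j<n. cmod (M $$ (i, j)) * cmod (v $ j))"
      by (metis (no_types, lifting) norm_mult norm_sum sum.cong)
    also have "\<dots> \<le> (\<Sum>j<n. b * cmod (v $ j))"
      using b M i unfolding norm_bound_def by (intro sum_mono mult_right_mono) auto
    finally show ?thesis by (simp add: sum_distrib_left)
  qed
  have "sqnorm (M *\<^sub>v v) = (\<Sum>i<n. (cmod ((M *\<^sub>v v) $ i))\<^sup>2)"
    using M unfolding sqnorm_def by simp
  also have "\<dots> \<le> (\<Sum>i<n. (b * (\<Sum>j<n. cmod (v $ j)))\<^sup>2)"
    using entry by (intro sum_mono power_mono) auto
  finally show ?thesis by simp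
qed

lemma spectral_radius_smult_le:
  assumes T: "T \<in> carrier_mat n n" and n: "0 < n" and a: "a \<noteq> 0"
  shows "spectral_radius (a \<cdot>\<^sub>m T) \<le> cmod a * spectral_radius T"
proof -
  have aT: "a \<cdot>\<^sub>m T \<in> carrier_mat n n" using T by simp
  obtain \<mu> where \<mu>: "eigenvalue (a \<cdot>\<^sub>m T) \<mu>" "cmod \<mu> = spectral_radius (a \<cdot>\<^sub>m T)"
    using spectral_radius_mem_max(1)[OF aT n] unfolding spectrum_def by auto
  then obtain v where v: "v \<in> carrier_vec n" "v \<noteq> 0\<^sub>v n" "(a \<cdot>\<^sub>m T) *\<^sub>v v = \<mu> \<cdot>\<^sub>v v"
    unfolding eigenvalue_def eigenvector_def using aT by auto
  have "T *\<^sub>v v = (\<mu> / a) \<cdot>\<^sub>v v"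
  proof -
    have "a \<cdot>\<^sub>v (T *\<^sub>v v) = \<mu> \<cdot>\<^sub>v v" using v(3) smult_mat_mult_vec[OF T v(1)] by simp
    hence "(1 / a) \<cdot>\<^sub>v (a \<cdot>\<^sub>v (T *\<^sub>v v)) = (1 / a) \<cdot>\<^sub>v (\<mu> \<cdot>\<^sub>v v)" by simp
    thus ?thesis using a by (simp add: smult_smult_assoc)
  qed
  hence "eigenvalue T (\<mu> / a)" unfolding eigenvalue_def eigenvector_def using T v by auto
  hence "cmod (\<mu> / a) \<le> spectral_radius T"
    using spectral_radius_mem_max(2)[OF T n] unfolding spectrum_def by auto
  thus ?thesis using \<mu>(2) a by (simp add: norm_divide field_simps)
qed

lemma spectral_radius_less_1_power_decay:
  assumes T: "T \<in> carrier_mat n n" and sr: "spectral_radius T < 1"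
  obtains c C where "0 \<le> c" "c < 1" "\<And>k. norm_bound (T ^\<^sub>m k) (c ^ k * C)"
proof (cases "n = 0")
  case True
  thus ?thesis using that[of 0 0] T unfolding norm_bound_def by auto
next
  case False
  define c where "c = (spectral_radius T + 1) / 2"
  have "spectral_radius T \<ge> 0"
    using spectral_radius_mem_max(1)[OF T] False by auto
  hence c: "0 < c" "c < 1" "spectral_radius T < c" using sr unfolding c_def by auto
  define S where "S = complex_of_real (1 / c) \<cdot>\<^sub>m T"
  have S: "S \<in> carrier_mat n n" using T unfolding S_def by simp
  have TS: "T = complex_of_real c \<cdot>\<^sub>m S"
    unfolding S_def using c T by (intro eq_matI) auto
  \<comment> \<open>the library only bounds the powers of S = T / c; the factor c ^ k gives the decay\<close>
  have "spectral_radius S \<le> cmod (complex_of_real (1 / c)) * spectral_radius T"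
    unfolding S_def using c False by (intro spectral_radius_smult_le[OF T]) auto
  also have "\<dots> = spectral_radius T / c" using c by (simp add: norm_divide)
  also have "\<dots> < 1" using c by simp
  finally obtain C where C: "\<And>k. norm_bound (S ^\<^sub>m k) C"
    using spectral_radius_jnf_norm_bound_less_1_upper_triangular[OF S] by auto
  have "norm_bound (T ^\<^sub>m k) (c ^ k * C)" for k
  proof
    fix i j assume "i < dim_row (T ^\<^sub>m k)" "j < dim_col (T ^\<^sub>m k)"
    hence ij: "i < n" "j < n" using T by (auto split: if_splits)
    have "(T ^\<^sub>m k) $$ (i, j) = complex_of_real (c ^ k) * (S ^\<^sub>m k) $$ (i, j)"
      unfolding TS pow_mat_smult[OF S] using ij S by simp
    moreover have "cmod ((S ^\<^sub>m k) $$ (i, j)) \<le> C" using C[of k] ij S unfolding norm_bound_def by auto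
    ultimately show "cmod ((T ^\<^sub>m k) $$ (i, j)) \<le> c ^ k * C"
      using c by (simp add: norm_mult norm_power mult_left_mono)
  qed
  thus ?thesis using that[of c C] c by simp
qed

lemma spectral_radius_less_1_shrinks:
  assumes T: "T \<in> carrier_mat n n" and sr: "spectral_radius T < 1"
    and v: "v \<in> carrier_vec n" "v \<noteq> 0\<^sub>v n"
  obtains k where "sqnorm (T ^\<^sub>m k *\<^sub>v v) < sqnorm v"
proof -
  obtain c C where c: "0 \<le> c" "c < 1" and C: "\<And>k. norm_bound (T ^\<^sub>m k) (c ^ k * C)"
    using spectral_radius_less_1_power_decay[OF T sr] by blast
  define Q where "Q = real n * (C * (\<Sum>j<n. cmod (v $ j)))\<^sup>2"
  have Q: "Q \<ge> 0" unfolding Q_def by simp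
  have bound: "sqnorm (T ^\<^sub>m k *\<^sub>v v) \<le> Q * (c\<^sup>2) ^ k" for k
  proof -
    have "sqnorm (T ^\<^sub>m k *\<^sub>v v) \<le> real n * (c ^ k * C * (\<Sum>j<n. cmod (v $ j)))\<^sup>2"
      using sqnorm_mult_mat_vec_le[OF _ v(1) C[of k]] T by simp
    also have "\<dots> = Q * (c\<^sup>2) ^ k"
      unfolding Q_def by (simp add: power_mult_distrib mult_ac flip: power_mult)
    finally show ?thesis .
  qed
  have pos: "sqnorm v > 0" using sqnorm_pos_iff[OF v(1)] v(2) by simp
  have "c\<^sup>2 < 1" using c by (simp add: power_less_one_iff)
  then obtain k where k: "(c\<^sup>2) ^ k < sqnorm v / (Q + 1)"
    using real_arch_pow_inv[of "sqnorm v / (Q + 1)" "c\<^sup>2"] pos Q by auto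
  have "Q * (c\<^sup>2) ^ k \<le> Q * (sqnorm v / (Q + 1))" using k Q by (intro mult_left_mono) auto
  also have "\<dots> < sqnorm v" using Q pos by (simp add: field_simps)
  finally show ?thesis using that bound[of k] by (meson le_less_trans)
qed

lemma contraction_unimodular_eigenvector:
  assumes T: "T \<in> carrier_mat n n"
    and contr: "\<And>v. v \<in> carrier_vec n \<Longrightarrow> sqnorm (T *\<^sub>v v) \<le> sqnorm v"
    and \<xi>: "\<xi> \<in> carrier_vec n" "\<xi> \<noteq> 0\<^sub>v n"
    and orbit: "\<And>k. sqnorm (T ^\<^sub>m k *\<^sub>v \<xi>) = sqnorm \<xi>"
  obtains \<zeta> l where "eigenvector T \<zeta> l" "cmod l = 1"
proof -
  have n: "0 < n"
  proof (rule ccontr)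
    assume "\<not> 0 < n"
    hence "\<xi> = 0\<^sub>v n" using \<xi>(1) by (intro eq_vecI) auto
    thus False using \<xi>(2) by simp
  qed
  have "\<not> spectral_radius T < 1"
    using spectral_radius_less_1_shrinks[OF T _ \<xi>] orbit by (metis less_irrefl)
  then obtain l where l: "eigenvalue T l" "cmod l \<ge> 1"
    using spectral_radius_mem_max(1)[OF T n] unfolding spectrum_def by auto
  then obtain \<zeta> where \<zeta>: "eigenvector T \<zeta> l" unfolding eigenvalue_def by blast
  hence \<zeta>c: "\<zeta> \<in> carrier_vec n" "\<zeta> \<noteq> 0\<^sub>v n" "T *\<^sub>v \<zeta> = l \<cdot>\<^sub>v \<zeta>"
    unfolding eigenvector_def using T by auto
  have "(cmod l)\<^sup>2 * sqnorm \<zeta> \<le> 1 * sqnorm \<zeta>"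
    using contr[OF \<zeta>c(1)] \<zeta>c(3) by (simp add: sqnorm_smult)
  hence "(cmod l)\<^sup>2 \<le> 1"
    using sqnorm_pos_iff[OF \<zeta>c(1)] \<zeta>c(2) by (meson mult_le_cancel_right_pos)
  hence "cmod l \<le> 1" by (simp add: power_le_one_iff abs_square_le_1)
  thus ?thesis using that \<zeta> l(2) by simp
qed

section \<open>Periods and prime words\<close>

definition is_period :: "(nat \<Rightarrow> 'a) \<Rightarrow> nat \<Rightarrow> bool" where
  "is_period f s = (\<forall>t. f (t + s) = f t)"

lemma is_period_add_mult: "is_period f s \<Longrightarrow> f (t + k * s) = f t"
proof (induction k arbitrary: t)
  case (Suc k)
  thus ?case unfolding is_period_def by (metis add.assoc add.commute mult_Suc)
qed simp

lemma is_period_mod_eq: "is_period f d \<Longrightarrow> f t = f (t mod d)"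
  using is_period_add_mult[of f d "t mod d" "t div d"] by simp

lemma is_period_mod:
  assumes a: "is_period f a" and b: "is_period f b" shows "is_period f (a mod b)"
  unfolding is_period_def
proof
  fix t
  have "f (t + a mod b) = f (t + a mod b + (a div b) * b)" by (rule is_period_add_mult[OF b, symmetric])
  also have "t + a mod b + (a div b) * b = t + a" by simp
  finally show "f (t + a mod b) = f t" using a unfolding is_period_def by simp
qed

lemma is_period_gcd: "is_period f a \<Longrightarrow> is_period f b \<Longrightarrow> is_period f (gcd a b)"
proof (induction a b rule: gcd_nat_induct)
  case (step m n)
  from step.IH[OF step.prems(2) is_period_mod[OF step.prems]] show ?case
    by (metis gcd_red_nat)
qed simp

lemma nth_concat_replicate:
  assumes "length u = g" "0 < g" "t < k * g"
  shows "concat (replicate k u) ! t = u ! (t mod g)"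
  using assms(3)
proof (induction k arbitrary: t)
  case (Suc k)
  show ?case
  proof (cases "t < g")
    case False
    hence "concat (replicate k u) ! (t - g) = u ! ((t - g) mod g)" using Suc by auto
    moreover have "(t - g) mod g = t mod g" using False by (simp add: mod_if)
    ultimately show ?thesis using False assms by (simp add: nth_append)
  qed (use assms in \<open>simp add: nth_append\<close>)
qed simp

lemma prime_word_cyclic_period_dvd:
  assumes w: "prime_word w" and s: "is_period (\<lambda>t. w ! (t mod length w)) s"
  shows "length w dvd s"
proof -
  define d f where "d = length w" and "f = (\<lambda>t. w ! (t mod d))"
  define g where "g = gcd s d"
  have d: "0 < d" using w unfolding prime_word_def d_def by simp
  have "is_period f d" unfolding is_period_def f_def by simp
  hence g_period: "is_period f g" using s is_period_gcd unfolding g_def f_def d_def by blast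
  have g: "0 < g" "g dvd d" "g dvd s" unfolding g_def using d by auto
  then obtain q where q: "d = g * q" by (auto elim: dvdE)
  have "w = concat (replicate q (take g w))"
  proof (rule nth_equalityI)
    show "length w = length (concat (replicate q (take g w)))"
      using q g d unfolding d_def by (simp add: length_concat sum_list_replicate min_def)
    fix t assume t: "t < length w"
    have "g \<le> d" using g d by (simp add: dvd_imp_le)
    moreover have "t < q * g" using t q unfolding d_def by (metis mult.commute)
    ultimately have "concat (replicate q (take g w)) ! t = take g w ! (t mod g)"
      using g unfolding d_def by (intro nth_concat_replicate) auto
    also have "\<dots> = w ! (t mod g)" using g by simp
    also have "\<dots> = f t"
      using is_period_mod_eq[OF g_period, of t] mod_less_divisor[OF g(1), of t] \<open>g \<le> d\<close>
      unfolding f_def by simp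
    finally show "w ! t = concat (replicate q (take g w)) ! t" using t unfolding f_def d_def by simp
  qed
  hence "q < 2" using w unfolding prime_word_def by (metis not_less)
  hence "g = d" using q d by (cases q) auto
  thus ?thesis using g unfolding d_def by simp
qed

lemma prime_word_shift_inj:
  assumes w: "prime_word w" and d: "length w = d" and i: "i < d" and j: "j < d"
    and eq: "\<forall>t<d. w ! ((i + t) mod d) = w ! ((j + t) mod d)"
  shows "i = j"
proof -
  have "\<not> (i < j)" if "i < j" "j < d" "\<forall>t<d. w ! ((i + t) mod d) = w ! ((j + t) mod d)" for i j
  proof
    define f where "f = (\<lambda>t. w ! (t mod d))"
    have "is_period f (j - i)" unfolding is_period_def
    proof
      fix t
      define t' where "t' = (t mod d + d - i) mod d"
      have "(j + t') mod d = (j + (t mod d + d - i)) mod d"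
        unfolding t'_def by (simp add: mod_add_right_eq)
      also have "j + (t mod d + d - i) = (t mod d + (j - i)) + d" using that by simp
      also have "(t mod d + (j - i) + d) mod d = (t + (j - i)) mod d" by (simp add: mod_add_left_eq)
      finally have "t' < d" "(i + t') mod d = t mod d" "(j + t') mod d = (t + (j - i)) mod d"
        using that unfolding t'_def by (auto simp: mod_add_right_eq)
      thus "f (t + (j - i)) = f t" using that(3) unfolding f_def by (metis mod_mod_trivial)
    qed
    hence "d dvd j - i" using prime_word_cyclic_period_dvd[OF w] unfolding f_def d by simp
    thus False using that dvd_imp_le[of d "j - i"] by simp
  qed
  thus ?thesis using i j eq by (metis linorder_neqE_nat)
qed

lemma least_period_prime_word:
  assumes k: "0 < k" "is_period p k"
  defines "d \<equiv> LEAST d. 0 < d \<and> is_period p d"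
  shows "0 < d" "is_period p d" "prime_word (map p [0..<d])"
proof -
  have d: "0 < d \<and> is_period p d" unfolding d_def by (rule LeastI[of _ k]) (use k in auto)
  thus "0 < d" "is_period p d" by auto
  have "\<not> (2 \<le> m \<and> map p [0..<d] = concat (replicate m u))" for m u
  proof
    assume m: "2 \<le> m \<and> map p [0..<d] = concat (replicate m u)"
    define g where "g = length u"
    have dg: "d = m * g"
      using arg_cong[OF m[THEN conjunct2], of length] unfolding g_def
      by (simp add: length_concat sum_list_replicate)
    have g: "0 < g" "g < d" using dg d m by (auto intro: Nat.gr0I)
    have "p t = u ! (t mod g)" for t
    proof -
      have "p t = map p [0..<d] ! (t mod d)" using is_period_mod_eq[of p d t] d by simp
      also have "\<dots> = u ! ((t mod d) mod g)" unfolding m[THEN conjunct2]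
        by (rule nth_concat_replicate) (use g_def g d dg in \<open>auto simp: mult.commute\<close>)
      also have "(t mod d) mod g = t mod g" using dg by (simp add: mod_mod_cancel)
      finally show ?thesis .
    qed
    hence "is_period p g" unfolding is_period_def by simp
    hence "d \<le> g" unfolding d_def using g by (intro Least_le) auto
    thus False using g by simp
  qed
  thus "prime_word (map p [0..<d])" unfolding prime_word_def using d by auto
qed

section \<open>Rays\<close>

lemma path_apply_carrier:
  assumes "A \<in> carrier_mat n n" "B \<in> carrier_mat n n" "v \<in> carrier_vec n"
  shows "path_apply (A, B, n) p k v \<in> carrier_vec n"
  by (induction k) (use assms in auto)

lemma path_apply_add:
  "path_apply M p (m + k) v = path_apply M (\<lambda>t. p (t + m)) k (path_apply M p m v)"
  by (induction k) (auto simp: add.commute)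

fun path_mat :: "complex mat \<Rightarrow> complex mat \<Rightarrow> nat \<Rightarrow> (nat \<Rightarrow> bool) \<Rightarrow> nat \<Rightarrow> complex mat" where
  "path_mat A B n p 0 = 1\<^sub>m n"
| "path_mat A B n p (Suc k) = (if p k then B else A) * path_mat A B n p k"

lemma path_mat_carrier:
  "A \<in> carrier_mat n n \<Longrightarrow> B \<in> carrier_mat n n \<Longrightarrow> path_mat A B n p k \<in> carrier_mat n n"
  by (induction k) auto

lemma path_apply_eq_path_mat:
  assumes "A \<in> carrier_mat n n" "B \<in> carrier_mat n n" "v \<in> carrier_vec n"
  shows "path_apply (A, B, n) p k v = path_mat A B n p k *\<^sub>v v"
proof (induction k)
  case (Suc k)
  have "path_mat A B n p k \<in> carrier_mat n n" using path_mat_carrier assms by blast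
  thus ?case using Suc assms by auto
qed (use assms in simp)

lemma submodule_path_apply:
  assumes "is_submodule (A, B, n) V" "v \<in> V"
  shows "path_apply (A, B, n) p m v \<in> V"
  using assms unfolding is_submodule_def by (induction m) auto

lemma path_apply_sqnorm_Suc:
  assumes pm: "is_pmodule (A, B, n)" and v: "v \<in> carrier_vec n"
  shows "sqnorm (path_apply (A, B, n) p (Suc m) v)
           + sqnorm ((if p m then A else B) *\<^sub>v path_apply (A, B, n) p m v)
         = sqnorm (path_apply (A, B, n) p m v)"
  using pmodule_sqnorm[OF pm path_apply_carrier[OF pmodule_carrier[OF pm] v]]
  by (cases "p m") (auto simp: add.commute)

lemma path_apply_sqnorm_antimono:
  assumes pm: "is_pmodule (A, B, n)" and v: "v \<in> carrier_vec n" and "m \<le> m'"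
  shows "sqnorm (path_apply (A, B, n) p m' v) \<le> sqnorm (path_apply (A, B, n) p m v)"
  using assms(3)
proof (induction m' rule: dec_induct)
  case (step k)
  thus ?case using path_apply_sqnorm_Suc[OF pm v, of p k]
      sqnorm_nonneg[of "(if p k then A else B) *\<^sub>v path_apply (A, B, n) p k v"] by linarith
qed simp

lemma contained_in_ray_iff:
  assumes "v \<in> carrier_vec n"
  shows "contained_in_ray (A, B, n) v p
           \<longleftrightarrow> v \<noteq> 0\<^sub>v n \<and> (\<forall>m. sqnorm (path_apply (A, B, n) p m v) = sqnorm v)"
  using assms unfolding contained_in_ray_def vnorm_eq_iff_sqnorm_eq by auto

lemma contained_in_ray_off_ray_zero:
  assumes pm: "is_pmodule (A, B, n)" and v: "v \<in> carrier_vec n"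
    and c: "contained_in_ray (A, B, n) v p"
  shows "(if p m then A else B) *\<^sub>v path_apply (A, B, n) p m v = 0\<^sub>v n"
proof -
  note AB = pmodule_carrier[OF pm]
  have "\<forall>k. sqnorm (path_apply (A, B, n) p k v) = sqnorm v"
    using c unfolding contained_in_ray_iff[OF v] by simp
  hence "sqnorm (path_apply (A, B, n) p (Suc m) v) = sqnorm (path_apply (A, B, n) p m v)"
    by metis
  hence "sqnorm ((if p m then A else B) *\<^sub>v path_apply (A, B, n) p m v) = 0"
    using path_apply_sqnorm_Suc[OF pm v, of p m] by linarith
  moreover have "(if p m then A else B) *\<^sub>v path_apply (A, B, n) p m v \<in> carrier_vec n"
    using path_apply_carrier[OF AB v] AB by simp
  ultimately show ?thesis using sqnorm_eq_0_iff by blast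
qed

locale ray_orbit =
  fixes A B :: "complex mat" and n :: nat and q :: "nat \<Rightarrow> bool" and \<zeta> :: "complex vec"
  assumes pm: "is_pmodule (A, B, n)" and \<zeta>: "\<zeta> \<in> carrier_vec n"
    and contained: "contained_in_ray (A, B, n) \<zeta> q"
begin

definition orb :: "nat \<Rightarrow> complex vec" where
  "orb k = path_apply (A, B, n) q k \<zeta>"

lemma carrier_AB: "A \<in> carrier_mat n n" "B \<in> carrier_mat n n"
  using pmodule_carrier[OF pm] by auto

lemma orb_carrier: "orb k \<in> carrier_vec n"
  unfolding orb_def using path_apply_carrier carrier_AB \<zeta> by blast

lemma orb_sqnorm: "sqnorm (orb k) = sqnorm \<zeta>"
  unfolding orb_def using contained unfolding contained_in_ray_iff[OF \<zeta>] by blast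

lemma orb_step: "(if x then B else A) *\<^sub>v orb k = (if q k = x then orb (Suc k) else 0\<^sub>v n)"
proof (cases "q k = x")
  case False
  thus ?thesis using contained_in_ray_off_ray_zero[OF pm \<zeta> contained, of k]
    unfolding orb_def by (cases x) auto
qed (simp add: orb_def)

lemma orb_cscalar_prod_Suc:
  "orb a \<bullet>c orb b = (if q a = q b then orb (Suc a) \<bullet>c orb (Suc b) else 0)"
proof -
  have "(A *\<^sub>v orb a) \<bullet>c (A *\<^sub>v orb b) + (B *\<^sub>v orb a) \<bullet>c (B *\<^sub>v orb b) = orb a \<bullet>c orb b"
    by (rule pmodule_cscalar_prod[OF pm orb_carrier orb_carrier])
  thus ?thesis
    using orb_step[of False a] orb_step[of False b] orb_step[of True a] orb_step[of True b]
      orb_carrier[of "Suc a"] orb_carrier[of "Suc b"]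
    by (cases "q a"; cases "q b") auto
qed

lemma orb_orthogonal:
  assumes "\<exists>t. q (i + t) \<noteq> q (j + t)" shows "orb i \<bullet>c orb j = 0"
proof -
  define t0 where "t0 = (LEAST t. q (i + t) \<noteq> q (j + t))"
  have t0: "q (i + t0) \<noteq> q (j + t0)" unfolding t0_def using assms by (rule LeastI_ex)
  have "\<forall>t<t0. q (i + t) = q (j + t)" unfolding t0_def using not_less_Least by blast
  hence shift: "orb i \<bullet>c orb j = orb (i + m) \<bullet>c orb (j + m)" if "m \<le> t0" for m
    using that by (induction m) (auto simp: orb_cscalar_prod_Suc[of "i + _"])
  show ?thesis using shift[of t0] orb_cscalar_prod_Suc[of "i + t0" "j + t0"] t0 by simp
qed

end

section \<open>The modules m_{w,phi}\<close>

lemma Suc_mod_inj: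
  fixes i k d :: nat
  assumes "i < d" "k < d" "Suc i mod d = Suc k mod d" shows "i = k"
  using assms by (auto simp: mod_if split: if_splits)

lemma bij_betw_add_mod:
  fixes i d :: nat assumes "0 < d" shows "bij_betw (\<lambda>t. (i + t) mod d) {..<d} {..<d}"
proof -
  have "inj_on (\<lambda>t. (i + t) mod d) {..<d}"
  proof (rule inj_onI)
    have le: "a = b" if "b \<le> a" "a < d" "(i + a) mod d = (i + b) mod d" for a b
    proof -
      have "d dvd a - b" using that mod_eq_dvd_iff_nat[of "i + b" "i + a" d] by simp
      moreover have "a - b < d" using that by simp
      ultimately have "a - b = 0" by (metis dvd_imp_le neq0_conv not_le)
      thus ?thesis using that by simp
    qed
    fix a b assume "a \<in> {..<d}" "b \<in> {..<d}" "(i + a) mod d = (i + b) mod d"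
    thus "a = b" using le[of b a] le[of a b] by (cases "b \<le> a") auto
  qed
  moreover have "(\<lambda>t. (i + t) mod d) ` {..<d} \<subseteq> {..<d}" using assms by auto
  ultimately show ?thesis by (simp add: bij_betw_def endo_inj_surj)
qed

lemma sum_add_mod: "0 < d \<Longrightarrow> (\<Sum>t<d. f ((i + t) mod d)) = (\<Sum>k<d. f (k::nat))"
  using sum.reindex_bij_betw[OF bij_betw_add_mod[of d i], of f] by simp

lemma prod_add_mod: "0 < d \<Longrightarrow> (\<Prod>t<d. f ((i + t) mod d)) = (\<Prod>k<d. f (k::nat))"
  using prod.reindex_bij_betw[OF bij_betw_add_mod[of d i], of f] by simp

lemma sum_mult_if_single:
  fixes c d :: nat assumes "c < d"
  shows "(\<Sum>k\<in>{0..<d}. f k * (if k = c \<and> P then g else 0)) = (if P then f c * g else (0::complex))"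
  using assms by (cases P) (simp_all add: if_distrib[of "\<lambda>z. _ * z"] sum.delta cong: if_cong)

definition weight :: "bool list \<Rightarrow> complex \<Rightarrow> nat \<Rightarrow> complex" where
  "weight w \<phi> i = (if i = length w - 1 then \<phi> else 1)"

definition letter_mat :: "bool list \<Rightarrow> complex \<Rightarrow> bool \<Rightarrow> complex mat" where
  "letter_mat w \<phi> x = (if x then B_w w else A_w w) * D_phi (length w) \<phi>"

lemma m_wphi_letter_mat: "m_wphi w \<phi> = (letter_mat w \<phi> False, letter_mat w \<phi> True, length w)"
  unfolding m_wphi_def letter_mat_def by simp

lemma letter_mat_carrier: "letter_mat w \<phi> x \<in> carrier_mat (length w) (length w)"
  unfolding letter_mat_def A_w_def B_w_def D_phi_def Let_def by auto

lemma letter_mat_index: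
  assumes "j < length w" "i < length w"
  shows "letter_mat w \<phi> x $$ (j, i)
           = (if j = Suc i mod length w \<and> w ! i = x then weight w \<phi> i else 0)"
proof -
  let ?d = "length w" and ?X = "if x then B_w w else A_w w"
  have "letter_mat w \<phi> x $$ (j, i)
      = (\<Sum>k\<in>{0..<?d}. ?X $$ (j, k) * (if k = i then weight w \<phi> i else 0))"
    using assms unfolding letter_mat_def
    by (auto simp: scalar_prod_def A_w_def B_w_def D_phi_def weight_def Let_def intro!: sum.cong)
  also have "\<dots> = ?X $$ (j, i) * weight w \<phi> i"
    using assms by (simp add: if_distrib[of "\<lambda>z. _ * z"] sum.delta cong: if_cong)
  finally show ?thesis using assms by (auto simp: A_w_def B_w_def Let_def)
qed

locale cycle_module =
  fixes w :: "bool list" and \<phi> :: complex and d :: nat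
  assumes length_w: "length w = d" and d: "0 < d" and \<phi>: "cmod \<phi> = 1"
begin

abbreviation X :: "bool \<Rightarrow> complex mat" where "X \<equiv> letter_mat w \<phi>"
abbreviation M :: pmod where "M \<equiv> m_wphi w \<phi>"

lemma M_eq: "M = (X False, X True, d)"
  using m_wphi_letter_mat length_w by simp

lemma X_carrier: "X x \<in> carrier_mat d d"
  using letter_mat_carrier[of w \<phi> x] unfolding length_w .

lemma dim_X [simp]: "dim_row (X x) = d" "dim_col (X x) = d"
  using X_carrier by auto

lemma X_index: "j < d \<Longrightarrow> i < d \<Longrightarrow> X x $$ (j, i) = (if j = Suc i mod d \<and> w ! i = x then weight w \<phi> i else 0)"
  using letter_mat_index[of j w i \<phi> x] length_w by simp

lemma norm_weight [simp]: "cmod (weight w \<phi> i) = 1"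
  unfolding weight_def using \<phi> by simp

lemma prod_weight: "(\<Prod>k<d. weight w \<phi> k) = \<phi>"
  unfolding weight_def using length_w d by (simp add: prod.delta)

lemma X_mult_vec_index:
  assumes v: "v \<in> carrier_vec d" and k: "k < d"
  shows "(X x *\<^sub>v v) $ (Suc k mod d) = (if w ! k = x then weight w \<phi> k * v $ k else 0)"
proof -
  have j: "Suc k mod d < d" using d by simp
  have "(X x *\<^sub>v v) $ (Suc k mod d) = (\<Sum>i\<in>{0..<d}. v $ i * (if i = k \<and> w ! k = x then weight w \<phi> k else 0))"
    using v j k by (auto simp: scalar_prod_def X_index mult.commute dest: Suc_mod_inj intro!: sum.cong)
  also have "\<dots> = (if w ! k = x then v $ k * weight w \<phi> k else 0)" by (rule sum_mult_if_single[OF k])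
  finally show ?thesis by (simp add: mult.commute)
qed

lemma X_mult_unit_vec:
  assumes j: "j < d"
  shows "X x *\<^sub>v unit_vec d j = (if w ! j = x then weight w \<phi> j \<cdot>\<^sub>v unit_vec d (Suc j mod d) else 0\<^sub>v d)"
proof (rule eq_vecI)
  fix l assume "l < dim_vec (if w ! j = x then weight w \<phi> j \<cdot>\<^sub>v unit_vec d (Suc j mod d) else 0\<^sub>v d)"
  hence l: "l < d" by (auto split: if_splits)
  have "(X x *\<^sub>v unit_vec d j) $ l = X x $$ (l, j)" using l j by simp
  thus "(X x *\<^sub>v unit_vec d j) $ l
          = (if w ! j = x then weight w \<phi> j \<cdot>\<^sub>v unit_vec d (Suc j mod d) else 0\<^sub>v d) $ l"
    using l j d by (auto simp: X_index unit_vec_def)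
qed auto

lemma path_apply_Suc: "path_apply M q (Suc m) v = X (q m) *\<^sub>v path_apply M q m v"
  unfolding M_eq by (cases "q m") auto

lemma path_apply_M_carrier: "v \<in> carrier_vec d \<Longrightarrow> path_apply M q m v \<in> carrier_vec d"
  unfolding M_eq using X_carrier by (intro path_apply_carrier)

definition path_weight :: "(nat \<Rightarrow> bool) \<Rightarrow> nat \<Rightarrow> nat \<Rightarrow> complex" where
  "path_weight q i m = (\<Prod>t<m. if w ! ((i + t) mod d) = q t then weight w \<phi> ((i + t) mod d) else 0)"

lemma path_apply_index:
  assumes v: "v \<in> carrier_vec d" and i: "i < d"
  shows "path_apply M q m v $ ((i + m) mod d) = v $ i * path_weight q i m"
proof (induction m)
  case (Suc m)
  have "(i + Suc m) mod d = Suc ((i + m) mod d) mod d" by (simp add: mod_Suc_eq)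
  hence "path_apply M q (Suc m) v $ ((i + Suc m) mod d)
      = (X (q m) *\<^sub>v path_apply M q m v) $ (Suc ((i + m) mod d) mod d)"
    unfolding path_apply_Suc by simp
  also have "\<dots> = (if w ! ((i + m) mod d) = q m
                     then weight w \<phi> ((i + m) mod d) * path_apply M q m v $ ((i + m) mod d) else 0)"
    using X_mult_vec_index[OF path_apply_M_carrier[OF v]] d by simp
  finally show ?case using Suc by (simp add: path_weight_def)
qed (use i in \<open>simp add: path_weight_def\<close>)

lemma norm_path_weight:
  "cmod (path_weight q i m) = (if \<forall>t<m. w ! ((i + t) mod d) = q t then 1 else 0)"
  unfolding path_weight_def by (induction m) (auto simp: less_Suc_eq norm_mult)

lemma sqnorm_path_apply:
  assumes v: "v \<in> carrier_vec d"
  shows "sqnorm (path_apply M q m v)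
           = (\<Sum>i<d. if \<forall>t<m. w ! ((i + t) mod d) = q t then (cmod (v $ i))\<^sup>2 else 0)"
proof -
  have "sqnorm (path_apply M q m v) = (\<Sum>j<d. (cmod (path_apply M q m v $ j))\<^sup>2)"
    using carrier_vecD[OF path_apply_M_carrier[OF v]] unfolding sqnorm_def by simp
  also have "\<dots> = (\<Sum>i<d. (cmod (path_apply M q m v $ ((i + m) mod d)))\<^sup>2)"
    by (rule sum_add_mod[OF d, of _ m, symmetric, simplified add.commute])
  also have "\<dots> = (\<Sum>i<d. if \<forall>t<m. w ! ((i + t) mod d) = q t then (cmod (v $ i))\<^sup>2 else 0)"
    by (intro sum.cong refl) (auto simp: path_apply_index[OF v] norm_mult norm_path_weight)
  finally show ?thesis .
qed

lemma contained_in_ray_M_iff: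
  assumes v: "v \<in> carrier_vec d"
  shows "contained_in_ray M v q
           \<longleftrightarrow> v \<noteq> 0\<^sub>v d \<and> (\<forall>i<d. v $ i \<noteq> 0 \<longrightarrow> (\<forall>t. w ! ((i + t) mod d) = q t))"
proof -
  have sq: "sqnorm v = (\<Sum>i<d. (cmod (v $ i))\<^sup>2)" unfolding sqnorm_def using v by simp
  have "(\<forall>m. sqnorm (path_apply M q m v) = sqnorm v)
          \<longleftrightarrow> (\<forall>i<d. v $ i \<noteq> 0 \<longrightarrow> (\<forall>t. w ! ((i + t) mod d) = q t))"
  proof
    assume all: "\<forall>m. sqnorm (path_apply M q m v) = sqnorm v"
    show "\<forall>i<d. v $ i \<noteq> 0 \<longrightarrow> (\<forall>t. w ! ((i + t) mod d) = q t)"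
    proof (intro allI impI, rule ccontr)
      fix i t assume i: "i < d" "v $ i \<noteq> 0" and t: "w ! ((i + t) mod d) \<noteq> q t"
      have "(\<Sum>i<d. if \<forall>t'<Suc t. w ! ((i + t') mod d) = q t' then (cmod (v $ i))\<^sup>2 else 0)
            < (\<Sum>i<d. (cmod (v $ i))\<^sup>2)"
        by (rule sum_strict_mono_ex1) (use i t in auto)
      moreover have "sqnorm (path_apply M q (Suc t) v) = sqnorm v" using all by blast
      ultimately show False using sqnorm_path_apply[OF v, of q "Suc t"] sq by linarith
    qed
  next
    assume H: "\<forall>i<d. v $ i \<noteq> 0 \<longrightarrow> (\<forall>t. w ! ((i + t) mod d) = q t)"
    show "\<forall>m. sqnorm (path_apply M q m v) = sqnorm v"
      unfolding sqnorm_path_apply[OF v] sq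
    proof (intro allI sum.cong refl)
      fix m i assume "i \<in> {..<d}"
      thus "(if \<forall>t<m. w ! ((i + t) mod d) = q t then (cmod (v $ i))\<^sup>2 else 0) = (cmod (v $ i))\<^sup>2"
        using H by (cases "v $ i = 0") auto
    qed
  qed
  thus ?thesis unfolding M_eq contained_in_ray_iff[OF v] by simp
qed

end

lemma is_subspace_carrier: "is_subspace n (carrier_vec n)"
  unfolding is_subspace_def by auto

lemma is_subspace_eq_carrier:
  assumes V: "is_subspace n V" and unit: "\<And>j. j < n \<Longrightarrow> unit_vec n j \<in> V"
  shows "V = carrier_vec n"
proof
  show "V \<subseteq> carrier_vec n" using V unfolding is_subspace_def by auto
  show "carrier_vec n \<subseteq> V"
  proof
    fix v :: "complex vec" assume v: "v \<in> carrier_vec n"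
    define trunc where "trunc k = vec n (\<lambda>l. if l < k then v $ l else 0)" for k
    have "trunc k \<in> V" if "k \<le> n" for k
      using that
    proof (induction k)
      case 0
      have "trunc 0 = 0\<^sub>v n" unfolding trunc_def by (intro eq_vecI) auto
      thus ?case using V unfolding is_subspace_def by auto
    next
      case (Suc k)
      have "trunc (Suc k) = trunc k + (v $ k) \<cdot>\<^sub>v unit_vec n k"
        unfolding trunc_def by (intro eq_vecI) (auto simp: unit_vec_def less_Suc_eq)
      thus ?case using V Suc unit[of k] unfolding is_subspace_def by auto
    qed
    moreover have "trunc n = v" unfolding trunc_def using v by (intro eq_vecI) auto
    ultimately show "v \<in> V" by auto
  qed
qed

lemma span_in_carrier: "S \<subseteq> carrier_vec n \<Longrightarrow> span_in n S \<subseteq> carrier_vec n"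
  unfolding span_in_def using is_subspace_carrier by auto

lemma span_in_superset: "S \<subseteq> span_in n S"
  unfolding span_in_def by auto

lemma span_in_empty: "span_in n {} = {0\<^sub>v n}"
proof -
  have "is_subspace n {0\<^sub>v n}" unfolding is_subspace_def by auto
  hence "span_in n {} \<subseteq> {0\<^sub>v n}" unfolding span_in_def by auto
  moreover have "0\<^sub>v n \<in> span_in n {}" unfolding span_in_def is_subspace_def by auto
  ultimately show ?thesis by auto
qed

lemma carrier_vec_neq_zero: "0 < n \<Longrightarrow> carrier_vec n \<noteq> {0\<^sub>v n :: complex vec}"
  using unit_vec_nonzero[of 0 n] unit_vec_carrier[of n 0] by (metis singletonD)

lemma irreducible_H_comp:
  assumes irr: "irreducible_pmod (A, B, n)" shows "H_comp (A, B, n) = carrier_vec n"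
proof -
  from irr have pm: "is_pmodule (A, B, n)" and n: "0 < n"
    and simple: "\<forall>V. is_submodule (A, B, n) V \<longrightarrow> V = {0\<^sub>v n} \<or> V = carrier_vec n"
    unfolding irreducible_pmod_def by auto
  have "is_submodule (A, B, n) (carrier_vec n)"
    unfolding is_submodule_def using is_subspace_carrier pmodule_carrier[OF pm] by auto
  hence "irreducible_submodule (A, B, n) (carrier_vec n)"
    unfolding irreducible_submodule_def using carrier_vec_neq_zero[OF n] simple by auto
  moreover have "\<Union>{V. irreducible_submodule (A, B, n) V} \<subseteq> carrier_vec n"
    unfolding irreducible_submodule_def is_submodule_def is_subspace_def by auto
  ultimately have "\<Union>{V. irreducible_submodule (A, B, n) V} = carrier_vec n" by auto
  moreover have "span_in n (carrier_vec n) = carrier_vec n"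
    using span_in_carrier[of "carrier_vec n" n] span_in_superset[of "carrier_vec n" n] by auto
  ultimately show ?thesis unfolding H_comp_def by simp
qed

context cycle_module
begin

lemma adj_X_mult_X_index:
  assumes a: "a < d" and b: "b < d"
  shows "(adj (X x) * X x) $$ (a, b) = (if a = b \<and> w ! a = x then 1 else 0)"
proof -
  have c: "Suc a mod d < d" using d by simp
  have "(adj (X x) * X x) $$ (a, b)
      = (\<Sum>k\<in>{0..<d}. X x $$ (k, b) * (if k = Suc a mod d \<and> w ! a = x then cnj (weight w \<phi> a) else 0))"
    using a b by (auto simp: scalar_prod_def X_index intro!: sum.cong)
  also have "\<dots> = (if w ! a = x then X x $$ (Suc a mod d, b) * cnj (weight w \<phi> a) else 0)"
    by (rule sum_mult_if_single[OF c])
  also have "\<dots> = (if a = b \<and> w ! a = x then 1 else 0)"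
  proof -
    have "cnj (weight w \<phi> a) * weight w \<phi> a = 1"
      using complex_norm_square[of "weight w \<phi> a"] by (simp add: mult.commute)
    thus ?thesis using X_index[OF c b] Suc_mod_inj[OF a b] by (auto simp: mult.commute)
  qed
  finally show ?thesis .
qed

lemma M_is_pmodule: "is_pmodule M"
  unfolding M_eq is_pmodule_def prod.case
proof (intro conjI X_carrier)
  have dims: "dim_row (adj (X x) * X x) = d" "dim_col (adj (X x) * X x) = d" for x
    by simp_all
  show "adj (X False) * X False + adj (X True) * X True = 1\<^sub>m d"
  proof (rule eq_matI)
    fix a b assume "a < dim_row (1\<^sub>m d)" "b < dim_col (1\<^sub>m d)"
    hence ab: "a < d" "b < d" by auto
    hence "(adj (X False) * X False + adj (X True) * X True) $$ (a, b)
        = (if a = b \<and> w ! a = False then 1 else 0) + (if a = b \<and> w ! a = True then 1 else 0)"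
      using dims by (simp only: index_add_mat(1) adj_X_mult_X_index)
    thus "(adj (X False) * X False + adj (X True) * X True) $$ (a, b) = 1\<^sub>m d $$ (a, b)"
      using ab by auto
  qed (simp_all add: dims)
qed

definition word_ray :: "nat \<Rightarrow> nat \<Rightarrow> bool" where
  "word_ray i t = w ! ((i + t) mod d)"

lemma periodic_word_ray: "periodic_ray (word_ray i)"
  unfolding periodic_ray_def word_ray_def using d by (intro exI[of _ d]) (simp add: add.assoc[symmetric])

lemma unit_vec_contained_in_word_ray: "j < d \<Longrightarrow> contained_in_ray M (unit_vec d j) (word_ray j)"
  using unit_vec_nonzero[of j d] unfolding contained_in_ray_M_iff[OF unit_vec_carrier] word_ray_def
  by auto

end

locale prime_cycle_module = cycle_module +
  assumes prime: "prime_word w"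
begin

lemma path_weight_word_ray:
  assumes i: "i < d" and j: "j < d"
  shows "path_weight (word_ray i) j d = (if j = i then \<phi> else 0)"
proof (cases "j = i")
  case True
  thus ?thesis using prod_add_mod[OF d, of "weight w \<phi>" i] prod_weight
    unfolding path_weight_def word_ray_def by simp
next
  case False
  then obtain t where "t < d" "w ! ((j + t) mod d) \<noteq> word_ray i t"
    using prime_word_shift_inj[OF prime length_w j i] unfolding word_ray_def by auto
  hence "path_weight (word_ray i) j d = 0" unfolding path_weight_def by (intro prod_zero) auto
  thus ?thesis using False by simp
qed

text \<open>Primality of w enters here: no other starting position reads w for a full period.\<close>

lemma path_apply_word_ray_period:
  assumes v: "v \<in> carrier_vec d" and i: "i < d"
  shows "path_apply M (word_ray i) d v = (v $ i * \<phi>) \<cdot>\<^sub>v unit_vec d i"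
proof (rule eq_vecI)
  fix j assume "j < dim_vec ((v $ i * \<phi>) \<cdot>\<^sub>v unit_vec d i)"
  hence j: "j < d" by simp
  have "path_apply M (word_ray i) d v $ j = path_apply M (word_ray i) d v $ ((j + d) mod d)"
    using j by simp
  also have "\<dots> = v $ j * path_weight (word_ray i) j d" by (rule path_apply_index[OF v j])
  finally show "path_apply M (word_ray i) d v $ j = ((v $ i * \<phi>) \<cdot>\<^sub>v unit_vec d i) $ j"
    using j i by (simp add: path_weight_word_ray)
qed (use path_apply_M_carrier[OF v] in simp)

lemma submodule_unit_vecs:
  assumes V: "is_submodule M V" and i: "i < d" "unit_vec d i \<in> V" and j: "j < d"
  shows "unit_vec d j \<in> V"
proof -
  have smult: "c \<cdot>\<^sub>v v \<in> V" if "v \<in> V" for c v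
    using V that unfolding M_eq is_submodule_def is_subspace_def by auto
  have step: "unit_vec d (Suc k mod d) \<in> V" if k: "k < d" "unit_vec d k \<in> V" for k
  proof -
    have "X (w ! k) *\<^sub>v unit_vec d k \<in> V"
      using V k unfolding M_eq is_submodule_def by (cases "w ! k") auto
    hence "weight w \<phi> k \<cdot>\<^sub>v unit_vec d (Suc k mod d) \<in> V" using X_mult_unit_vec[OF k(1)] by simp
    hence "(1 / weight w \<phi> k) \<cdot>\<^sub>v (weight w \<phi> k \<cdot>\<^sub>v unit_vec d (Suc k mod d)) \<in> V" by (rule smult)
    moreover have "weight w \<phi> k \<noteq> 0" using norm_weight[of k] by (metis norm_zero zero_neq_one)
    ultimately show ?thesis by (simp add: smult_smult_assoc)
  qed
  have "unit_vec d ((i + k) mod d) \<in> V" for k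
  proof (induction k)
    case (Suc k)
    thus ?case using step[of "(i + k) mod d"] d by (simp add: mod_Suc_eq)
  qed (use i in simp)
  from this[of "d - i + j"] show ?thesis using i j by simp
qed

lemma M_irreducible: "irreducible_pmod M"
  unfolding irreducible_pmod_def M_eq prod.case
proof (intro conjI allI impI d)
  show "is_pmodule (X False, X True, d)" using M_is_pmodule M_eq by simp
  fix V assume "is_submodule (X False, X True, d) V"
  hence V: "is_submodule M V" using M_eq by simp
  have sp: "is_subspace d V" using V unfolding M_eq is_submodule_def by simp
  show "V = {0\<^sub>v d} \<or> V = carrier_vec d"
  proof (cases "V \<subseteq> {0\<^sub>v d}")
    case False
    then obtain v where vV: "v \<in> V" and v0: "v \<noteq> 0\<^sub>v d" by auto
    have v: "v \<in> carrier_vec d" using sp vV unfolding is_subspace_def by auto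
    then obtain i where i: "i < d" "v $ i \<noteq> 0" using v0 by (metis eq_vecI carrier_vecD index_zero_vec)
    have "path_apply M (word_ray i) d v \<in> V"
      using submodule_path_apply[of "X False" "X True" d V] V vV unfolding M_eq by blast
    hence "(1 / (v $ i * \<phi>)) \<cdot>\<^sub>v ((v $ i * \<phi>) \<cdot>\<^sub>v unit_vec d i) \<in> V"
      using sp unfolding path_apply_word_ray_period[OF v i(1)] is_subspace_def by blast
    moreover have "\<phi> \<noteq> 0" using \<phi> by auto
    ultimately have "unit_vec d i \<in> V" using i by (simp add: smult_smult_assoc)
    thus ?thesis using is_subspace_eq_carrier[OF sp] submodule_unit_vecs[OF V i(1)] by blast
  qed (use sp in \<open>auto simp: is_subspace_def\<close>)
qed

lemma M_atomic: "atomic_pmod M"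
proof -
  have comp: "H_comp M = carrier_vec d" using irreducible_H_comp M_irreducible M_eq by metis
  define S where "S = {v \<in> H_comp M. \<exists>p. periodic_ray p \<and> contained_in_ray M v p}"
  have "unit_vec d j \<in> S" if "j < d" for j
    using periodic_word_ray unit_vec_contained_in_word_ray[OF that] unfolding S_def comp by auto
  hence "carrier_vec d \<subseteq> span_in d S"
    unfolding span_in_def using is_subspace_eq_carrier by blast
  moreover have "span_in d S \<subseteq> carrier_vec d" by (rule span_in_carrier) (auto simp: S_def comp)
  moreover have "H_atom M = span_in d S" unfolding S_def H_atom_def M_eq by simp
  ultimately show ?thesis unfolding atomic_pmod_def comp by blast
qed

end

lemma unit_equiv_refl:
  "A \<in> carrier_mat n n \<Longrightarrow> B \<in> carrier_mat n n \<Longrightarrow> unit_equiv (A, B, n) (A, B, n)"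
  unfolding unit_equiv_def unitary_mat_def prod.case
  by (intro conjI exI[of _ "1\<^sub>m n"]) (auto simp: adj_one)

lemma unit_equiv_sym:
  assumes "A \<in> carrier_mat n n" "B \<in> carrier_mat n n" "A' \<in> carrier_mat n' n'" "B' \<in> carrier_mat n' n'"
    and "unit_equiv (A, B, n) (A', B', n')"
  shows "unit_equiv (A', B', n') (A, B, n)"
proof -
  from assms(5) obtain U where "n = n'" "unitary_mat n U" "U * A = A' * U" "U * B = B' * U"
    unfolding unit_equiv_def by auto
  thus ?thesis unfolding unit_equiv_def prod.case
    using unitary_adj unitary_intertwine_adj assms(1-4) by metis
qed

lemma unit_equiv_trans:
  assumes "A \<in> carrier_mat n n" "B \<in> carrier_mat n n"
    and "A' \<in> carrier_mat n' n'" "B' \<in> carrier_mat n' n'"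
    and "A'' \<in> carrier_mat n'' n''" "B'' \<in> carrier_mat n'' n''"
    and "unit_equiv (A, B, n) (A', B', n')" and "unit_equiv (A', B', n') (A'', B'', n'')"
  shows "unit_equiv (A, B, n) (A'', B'', n'')"
proof -
  from assms(7) obtain U where n': "n' = n" and U: "unitary_mat n U"
    and UA: "U * A = A' * U" and UB: "U * B = B' * U" unfolding unit_equiv_def by auto
  from assms(8) obtain V where n'': "n'' = n" and V: "unitary_mat n V"
    and VA: "V * A' = A'' * V" and VB: "V * B' = B'' * V" unfolding unit_equiv_def n' by auto
  have Uc: "U \<in> carrier_mat n n" and Vc: "V \<in> carrier_mat n n"
    using U V unfolding unitary_mat_def by auto
  have compose: "(V * U) * Y = Y'' * (V * U)"
    if "U * Y = Y' * U" "V * Y' = Y'' * V"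
      "Y \<in> carrier_mat n n" "Y' \<in> carrier_mat n n" "Y'' \<in> carrier_mat n n" for Y Y' Y''
  proof -
    have "(V * U) * Y = V * (Y' * U)" unfolding assoc_mult_mat[OF Vc Uc that(3)] that(1) ..
    also have "\<dots> = (Y'' * V) * U" unfolding assoc_mult_mat[OF Vc that(4) Uc, symmetric] that(2) ..
    also have "\<dots> = Y'' * (V * U)" by (rule assoc_mult_mat[OF that(5) Vc Uc])
    finally show ?thesis .
  qed
  have "(V * U) * A = A'' * (V * U)" "(V * U) * B = B'' * (V * U)"
    using compose[OF UA VA] compose[OF UB VB] assms(1-6) unfolding n' n'' by simp_all
  thus ?thesis unfolding unit_equiv_def prod.case n' n''
    using unitary_mult[OF U V] by blast
qed

lemma irr_atomic_carrier:
  assumes "irr_atomic (A, B, n)" shows "A \<in> carrier_mat n n" "B \<in> carrier_mat n n"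
  using assms pmodule_carrier unfolding irr_atomic_def by blast+

lemma equiv_ue_rel: "equiv {M. irr_atomic M} ue_rel"
proof (rule equivI)
  show "ue_rel \<subseteq> {M. irr_atomic M} \<times> {M. irr_atomic M}" unfolding ue_rel_def by auto
  show "refl_on {M. irr_atomic M} ue_rel"
  proof (rule refl_onI)
    fix M assume "M \<in> {M. irr_atomic M}"
    moreover obtain A B n where eq: "M = (A, B, n)" by (metis prod.exhaust)
    ultimately show "(M, M) \<in> ue_rel"
      unfolding ue_rel_def eq using unit_equiv_refl irr_atomic_carrier by simp
  qed
  show "sym ue_rel"
  proof (rule symI)
    fix M M' assume MM': "(M, M') \<in> ue_rel"
    obtain A B n A' B' n' where eqs: "M = (A, B, n)" "M' = (A', B', n')" by (metis prod.exhaust)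
    have ia: "irr_atomic (A, B, n)" "irr_atomic (A', B', n')"
      and ue: "unit_equiv (A, B, n) (A', B', n')"
      using MM' unfolding ue_rel_def eqs by simp_all
    have "unit_equiv (A', B', n') (A, B, n)"
      by (rule unit_equiv_sym[OF irr_atomic_carrier[OF ia(1)] irr_atomic_carrier[OF ia(2)] ue])
    thus "(M', M) \<in> ue_rel" unfolding ue_rel_def eqs using ia by simp
  qed
  show "trans ue_rel"
  proof (rule transI)
    fix M M' M'' assume MM': "(M, M') \<in> ue_rel" and M'M'': "(M', M'') \<in> ue_rel"
    obtain A B n A' B' n' A'' B'' n''
      where eqs: "M = (A, B, n)" "M' = (A', B', n')" "M'' = (A'', B'', n'')" by (metis prod.exhaust)
    have ia: "irr_atomic (A, B, n)" "irr_atomic (A', B', n')" "irr_atomic (A'', B'', n'')"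
      and ue: "unit_equiv (A, B, n) (A', B', n')" "unit_equiv (A', B', n') (A'', B'', n'')"
      using MM' M'M'' unfolding ue_rel_def eqs by simp_all
    have "unit_equiv (A, B, n) (A'', B'', n'')"
      by (rule unit_equiv_trans[OF irr_atomic_carrier[OF ia(1)] irr_atomic_carrier[OF ia(2)]
          irr_atomic_carrier[OF ia(3)] ue])
    thus "(M, M'') \<in> ue_rel" unfolding ue_rel_def eqs using ia by simp
  qed
qed

lemma intertwiner_path_apply:
  assumes U: "U \<in> carrier_mat n' n" and AB: "A \<in> carrier_mat n n" "B \<in> carrier_mat n n"
    and AB': "A' \<in> carrier_mat n' n'" "B' \<in> carrier_mat n' n'"
    and UA: "U * A = A' * U" and UB: "U * B = B' * U" and v: "v \<in> carrier_vec n"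
  shows "U *\<^sub>v path_apply (A, B, n) q m v = path_apply (A', B', n') q m (U *\<^sub>v v)"
proof (induction m)
  case (Suc m)
  let ?X = "if q m then B else A" and ?X' = "if q m then B' else A'"
  have X: "?X \<in> carrier_mat n n" "?X' \<in> carrier_mat n' n'" "U * ?X = ?X' * U"
    using AB AB' UA UB by auto
  have u: "path_apply (A, B, n) q m v \<in> carrier_vec n" using path_apply_carrier[OF AB v] .
  have "U *\<^sub>v path_apply (A, B, n) q (Suc m) v = U *\<^sub>v (?X *\<^sub>v path_apply (A, B, n) q m v)"
    by simp
  also have "\<dots> = (U * ?X) *\<^sub>v path_apply (A, B, n) q m v"
    by (rule assoc_mult_mat_vec[symmetric, OF U X(1) u])
  also have "\<dots> = ?X' *\<^sub>v (U *\<^sub>v path_apply (A, B, n) q m v)"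
    unfolding X(3) by (rule assoc_mult_mat_vec[OF X(2) U u])
  also have "\<dots> = path_apply (A', B', n') q (Suc m) (U *\<^sub>v v)" using Suc by simp
  finally show ?case .
qed simp

lemma unitary_contained_in_ray:
  assumes U: "unitary_mat n U" and AB: "A \<in> carrier_mat n n" "B \<in> carrier_mat n n"
    and AB': "A' \<in> carrier_mat n n" "B' \<in> carrier_mat n n"
    and UA: "U * A = A' * U" and UB: "U * B = B' * U" and v: "v \<in> carrier_vec n"
    and contained: "contained_in_ray (A, B, n) v q"
  shows "contained_in_ray (A', B', n) (U *\<^sub>v v) q"
proof -
  have Uc: "U \<in> carrier_mat n n" using U unfolding unitary_mat_def by simp
  have Uv: "U *\<^sub>v v \<in> carrier_vec n" using Uc v by simp
  have "sqnorm (path_apply (A', B', n) q m (U *\<^sub>v v)) = sqnorm (U *\<^sub>v v)" for m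
    using intertwiner_path_apply[OF Uc AB AB' UA UB v, of q m, symmetric] contained
      sqnorm_unitary[OF U path_apply_carrier[OF AB v]] sqnorm_unitary[OF U v]
    unfolding contained_in_ray_iff[OF v] by simp
  moreover have "U *\<^sub>v v \<noteq> 0\<^sub>v n"
    using contained sqnorm_unitary[OF U v] sqnorm_pos_iff[OF v] sqnorm_pos_iff[OF Uv]
    unfolding contained_in_ray_iff[OF v] by simp
  ultimately show ?thesis unfolding contained_in_ray_iff[OF Uv] by simp
qed

section \<open>Injectivity\<close>

lemma (in cycle_module) contained_in_ray_M_shift:
  assumes v: "v \<in> carrier_vec d" and "contained_in_ray M v q"
  obtains i where "i < d" "\<forall>t. w ! ((i + t) mod d) = q t"
proof -
  have "v \<noteq> 0\<^sub>v d" and H: "\<forall>i<d. v $ i \<noteq> 0 \<longrightarrow> (\<forall>t. w ! ((i + t) mod d) = q t)"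
    using assms contained_in_ray_M_iff by auto
  then obtain i where "i < d" "v $ i \<noteq> 0" using v by (metis eq_vecI carrier_vecD index_zero_vec)
  thus ?thesis using that H by blast
qed

lemma representatives_rotate_eq:
  assumes W: "representatives W" and "w \<in> W" "w' \<in> W" and "rotate i w' = w"
  shows "w' = w"
proof -
  have "prime_word w" using W assms(2) unfolding representatives_def by blast
  moreover have "cyc_equiv w' w" using assms(4) unfolding cyc_equiv_def by blast
  moreover have "cyc_equiv w w" unfolding cyc_equiv_def by (rule exI[of _ 0]) simp
  ultimately show ?thesis using W assms(2,3) unfolding representatives_def by blast
qed

locale cycle_module_equivalence =
  m1: prime_cycle_module w \<phi> d + m2: prime_cycle_module w' \<phi>' d for w \<phi> w' \<phi>' d +
  fixes U :: "complex mat"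
  assumes U: "unitary_mat d U"
    and UX: "\<And>x. U * letter_mat w \<phi> x = letter_mat w' \<phi>' x * U"
begin

lemma U_carrier: "U \<in> carrier_mat d d"
  using U unfolding unitary_mat_def by simp

lemma path_apply_U:
  "v \<in> carrier_vec d \<Longrightarrow> path_apply m2.M q m (U *\<^sub>v v) = U *\<^sub>v path_apply m1.M q m v"
  using intertwiner_path_apply[OF U_carrier m1.X_carrier m1.X_carrier m2.X_carrier m2.X_carrier UX UX]
  unfolding m1.M_eq m2.M_eq by simp

lemma U_unit_vec_contained: "contained_in_ray m2.M (U *\<^sub>v unit_vec d 0) (m1.word_ray 0)"
  using unitary_contained_in_ray[OF U m1.X_carrier m1.X_carrier m2.X_carrier m2.X_carrier UX UX]
    m1.unit_vec_contained_in_word_ray[OF m1.d] unfolding m1.M_eq m2.M_eq by simp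

lemma rotate_eq: obtains i where "rotate i w' = w"
proof -
  obtain i where i: "\<forall>t. w' ! ((i + t) mod d) = m1.word_ray 0 t"
    using m2.contained_in_ray_M_shift[OF _ U_unit_vec_contained] U_carrier by auto
  have "rotate i w' = w"
  proof (rule nth_equalityI)
    show "length (rotate i w') = length w" using m1.length_w m2.length_w by simp
    fix t assume "t < length (rotate i w')"
    hence "t < d" using m2.length_w by simp
    thus "rotate i w' ! t = w ! t" using i m2.length_w by (simp add: nth_rotate m1.word_ray_def)
  qed
  thus ?thesis using that by blast
qed

lemma monodromy_eq:
  assumes "w' = w" shows "\<phi> = \<phi>'"
proof -
  define e where "e = (unit_vec d 0 :: complex vec)"
  have e: "e \<in> carrier_vec d" unfolding e_def by simp
  have Ue: "U *\<^sub>v e \<in> carrier_vec d" using U_carrier e by simp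
  have Ue_ne: "U *\<^sub>v e \<noteq> 0\<^sub>v d"
    using U_unit_vec_contained unfolding contained_in_ray_def e_def using U_carrier by simp
  \<comment> \<open>the monodromy along one period is phi in the first module and phi' in the second\<close>
  have "path_apply m2.M (m1.word_ray 0) d (U *\<^sub>v e) = U *\<^sub>v path_apply m1.M (m1.word_ray 0) d e"
    by (rule path_apply_U[OF e])
  also have "\<dots> = \<phi> \<cdot>\<^sub>v (U *\<^sub>v e)"
    using m1.path_apply_word_ray_period[OF e m1.d] U_carrier e m1.d unfolding e_def
    by (simp add: mult_mat_vec)
  finally have eq: "\<phi> \<cdot>\<^sub>v (U *\<^sub>v e) = ((U *\<^sub>v e) $ 0 * \<phi>') \<cdot>\<^sub>v e"
    using m2.path_apply_word_ray_period[OF Ue m1.d] assms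
    unfolding m1.word_ray_def m2.word_ray_def e_def by simp
  have "(U *\<^sub>v e) $ 0 \<noteq> 0"
  proof
    assume "(U *\<^sub>v e) $ 0 = 0"
    hence "(1 / \<phi>) \<cdot>\<^sub>v (\<phi> \<cdot>\<^sub>v (U *\<^sub>v e)) = 0\<^sub>v d" unfolding eq using e by (intro eq_vecI) auto
    moreover have "\<phi> \<noteq> 0" using m1.\<phi> by auto
    ultimately show False using Ue_ne by (simp add: smult_smult_assoc)
  qed
  moreover have "\<phi> * (U *\<^sub>v e) $ 0 = (U *\<^sub>v e) $ 0 * \<phi>'"
    using arg_cong[OF eq, of "\<lambda>v. v $ 0"] m1.d U_carrier unfolding e_def by simp
  ultimately show ?thesis by (simp add: mult.commute)
qed

end

lemma m_wphi_unit_equiv_imp_eq: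
  assumes W: "representatives W" and w: "w \<in> W" "w' \<in> W" and \<phi>: "cmod \<phi> = 1" "cmod \<phi>' = 1"
    and ue: "unit_equiv (m_wphi w \<phi>) (m_wphi w' \<phi>')"
  shows "w = w' \<and> \<phi> = \<phi>'"
proof -
  obtain U where d: "length w' = length w" and U: "unitary_mat (length w) U"
    and UX: "U * letter_mat w \<phi> False = letter_mat w' \<phi>' False * U"
      "U * letter_mat w \<phi> True = letter_mat w' \<phi>' True * U"
    using ue unfolding m_wphi_letter_mat unit_equiv_def by auto
  have "prime_word w" "prime_word w'" using W w unfolding representatives_def by auto
  moreover from this have "0 < length w" unfolding prime_word_def by simp
  ultimately interpret cycle_module_equivalence w \<phi> w' \<phi>' "length w" U
    using \<phi> d U UX by unfold_locales (auto intro: bool.induct)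
  obtain i where "rotate i w' = w" by (rule rotate_eq)
  hence "w' = w" using representatives_rotate_eq[OF W w] by blast
  thus ?thesis using monodromy_eq by simp
qed

section \<open>Surjectivity\<close>

lemma irr_atomic_periodic_contained:
  assumes "irr_atomic (A, B, n)"
  obtains \<xi> p where "\<xi> \<in> carrier_vec n" "periodic_ray p" "contained_in_ray (A, B, n) \<xi> p"
proof -
  have irr: "irreducible_pmod (A, B, n)" and atomic: "atomic_pmod (A, B, n)"
    using assms unfolding irr_atomic_def by auto
  have n: "0 < n" using irr unfolding irreducible_pmod_def by auto
  have comp: "H_comp (A, B, n) = carrier_vec n" by (rule irreducible_H_comp[OF irr])
  show ?thesis
  proof (rule ccontr)
    assume "\<not> ?thesis"
    hence "{v \<in> H_comp (A, B, n). \<exists>p. periodic_ray p \<and> contained_in_ray (A, B, n) v p} = {}"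
      using that comp by auto
    hence "H_atom (A, B, n) = {0\<^sub>v n}" by (simp only: H_atom_def prod.case span_in_empty)
    thus False using atomic comp carrier_vec_neq_zero[OF n] unfolding atomic_pmod_def by simp
  qed
qed

lemma periodic_ray_representative:
  assumes W: "representatives W" and p: "periodic_ray p"
  obtains w i where "w \<in> W" "\<And>t. p (t + i) = w ! (t mod length w)"
proof -
  obtain k where "0 < k" "is_period p k" using p unfolding periodic_ray_def is_period_def by auto
  then obtain d where d: "0 < d" "is_period p d" "prime_word (map p [0..<d])"
    using least_period_prime_word by blast
  then obtain w r where w: "w \<in> W" "rotate r w = map p [0..<d]"
    using W unfolding representatives_def cyc_equiv_def by blast
  have len: "length w = d" using arg_cong[OF w(2), of length] by simp
  define i where "i = d - r mod d"
  have "p (t + i) = w ! (t mod d)" for t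
  proof -
    have m: "(t + i) mod d < d" using d by simp
    have "r + i = (r - r mod d) + d"
      using mod_less_divisor[OF d(1), of r] mod_less_eq_dividend[of r d] unfolding i_def by linarith
    also have "r - r mod d = d * (r div d)" by (simp add: minus_mod_eq_mult_div)
    finally have "r + i = d * Suc (r div d)" by simp
    have "(r + (t + i) mod d) mod d = (t + (r + i)) mod d" by (simp add: mod_add_right_eq add_ac)
    also have "\<dots> = t mod d" unfolding \<open>r + i = d * Suc (r div d)\<close> by (rule mod_mult_self2)
    finally have "(r + (t + i) mod d) mod d = t mod d" .
    thus ?thesis
      using is_period_mod_eq[OF d(2), of "t + i"] arg_cong[OF w(2), of "\<lambda>xs. xs ! ((t + i) mod d)"] m len
      by (simp add: nth_rotate)
  qed
  thus ?thesis using that w(1) len by blast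
qed

lemma contained_in_ray_path_apply:
  assumes pm: "is_pmodule (A, B, n)" and \<xi>: "\<xi> \<in> carrier_vec n"
    and contained: "contained_in_ray (A, B, n) \<xi> p"
  shows "contained_in_ray (A, B, n) (path_apply (A, B, n) p i \<xi>) (\<lambda>t. p (t + i))"
proof -
  have \<xi>': "path_apply (A, B, n) p i \<xi> \<in> carrier_vec n"
    using path_apply_carrier[OF pmodule_carrier[OF pm] \<xi>] .
  have "\<forall>m. sqnorm (path_apply (A, B, n) p m \<xi>) = sqnorm \<xi>" and "\<xi> \<noteq> 0\<^sub>v n"
    using contained unfolding contained_in_ray_iff[OF \<xi>] by auto
  moreover have "path_apply (A, B, n) (\<lambda>t. p (t + i)) m (path_apply (A, B, n) p i \<xi>)
      = path_apply (A, B, n) p (i + m) \<xi>" for m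
    by (rule path_apply_add[symmetric])
  ultimately show ?thesis
    unfolding contained_in_ray_iff[OF \<xi>'] using sqnorm_eq_0_iff[OF \<xi>] sqnorm_eq_0_iff[OF \<xi>'] by metis
qed

lemma path_mat_period_power:
  assumes AB: "A \<in> carrier_mat n n" "B \<in> carrier_mat n n" and per: "\<And>t. q (t + d) = q t"
    and v: "v \<in> carrier_vec n"
  shows "path_mat A B n q d ^\<^sub>m j *\<^sub>v v = path_apply (A, B, n) q (d * j) v"
  using v
proof (induction j arbitrary: v)
  case (Suc j)
  let ?T = "path_mat A B n q d"
  have T: "?T \<in> carrier_mat n n" using path_mat_carrier AB by blast
  have "?T ^\<^sub>m Suc j *\<^sub>v v = ?T ^\<^sub>m j *\<^sub>v (?T *\<^sub>v v)"
    using T Suc.prems by (simp add: assoc_mult_mat_vec[of _ n n _ n])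
  also have "\<dots> = path_apply (A, B, n) q (d * j) (path_apply (A, B, n) q d v)"
    using Suc T path_apply_eq_path_mat[OF AB Suc.prems] by simp
  also have "\<dots> = path_apply (A, B, n) (\<lambda>t. q (t + d)) (d * j) (path_apply (A, B, n) q d v)"
    using per by simp
  also have "\<dots> = path_apply (A, B, n) q (d + d * j) v" by (rule path_apply_add[symmetric])
  finally show ?case by simp
qed (use path_mat_carrier[OF AB, of q d] in simp)

lemma contained_in_periodic_ray_if_eigenvector:
  assumes pm: "is_pmodule (A, B, n)" and d: "0 < d" and per: "\<And>t. q (t + d) = q t"
    and \<zeta>: "\<zeta> \<in> carrier_vec n" "\<zeta> \<noteq> 0\<^sub>v n"
    and ret: "path_apply (A, B, n) q d \<zeta> = l \<cdot>\<^sub>v \<zeta>" and l: "cmod l = 1"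
  shows "contained_in_ray (A, B, n) \<zeta> q"
proof -
  note AB = pmodule_carrier[OF pm]
  let ?T = "path_mat A B n q d"
  have T: "?T \<in> carrier_mat n n" using path_mat_carrier AB by blast
  have "eigenvector ?T \<zeta> l"
    using ret path_apply_eq_path_mat[OF AB \<zeta>(1)] \<zeta> T unfolding eigenvector_def by simp
  \<comment> \<open>the norm along the ray decreases, but returns to its initial value at multiples of d\<close>
  have "sqnorm (path_apply (A, B, n) q m \<zeta>) = sqnorm \<zeta>" for m
  proof -
    have "path_apply (A, B, n) q (d * m) \<zeta> = l ^ m \<cdot>\<^sub>v \<zeta>"
      using path_mat_period_power[of A n B q d, OF AB per \<zeta>(1)] eigenvector_pow[OF T \<open>eigenvector ?T \<zeta> l\<close>]
      by simp
    hence "sqnorm (path_apply (A, B, n) q (d * m) \<zeta>) = sqnorm \<zeta>"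
      by (simp add: sqnorm_smult norm_power l)
    moreover have "m \<le> d * m" using d by simp
    ultimately show ?thesis
      using path_apply_sqnorm_antimono[OF pm \<zeta>(1), of m "d * m" q]
        path_apply_sqnorm_antimono[OF pm \<zeta>(1), of 0 m q] by simp
  qed
  thus ?thesis unfolding contained_in_ray_iff[OF \<zeta>(1)] using \<zeta>(2) by simp
qed

lemma unimodular_eigenvector_on_periodic_ray:
  assumes pm: "is_pmodule (A, B, n)" and d: "0 < d" and per: "\<And>t. q (t + d) = q t"
    and \<xi>: "\<xi> \<in> carrier_vec n" and contained: "contained_in_ray (A, B, n) \<xi> q"
  obtains \<zeta> l where "\<zeta> \<in> carrier_vec n" "sqnorm \<zeta> = 1" "cmod l = 1"
    "contained_in_ray (A, B, n) \<zeta> q" "path_apply (A, B, n) q d \<zeta> = l \<cdot>\<^sub>v \<zeta>"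
proof -
  note AB = pmodule_carrier[OF pm]
  define T where "T = path_mat A B n q d"
  have T: "T \<in> carrier_mat n n" unfolding T_def using path_mat_carrier AB by blast
  note pow = path_mat_period_power[of A n B q d, OF AB per, folded T_def]
  have contr: "sqnorm (T *\<^sub>v v) \<le> sqnorm v" if "v \<in> carrier_vec n" for v
    using path_apply_sqnorm_antimono[OF pm that, of 0 d q] pow[OF that, of 1] T that by simp
  have "\<xi> \<noteq> 0\<^sub>v n" and "\<And>m. sqnorm (path_apply (A, B, n) q m \<xi>) = sqnorm \<xi>"
    using contained unfolding contained_in_ray_iff[OF \<xi>] by auto
  then obtain \<zeta>0 l where "eigenvector T \<zeta>0 l" and l: "cmod l = 1"
    using contraction_unimodular_eigenvector[OF T contr \<xi>] pow[OF \<xi>] by metis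
  hence \<zeta>0: "\<zeta>0 \<in> carrier_vec n" "\<zeta>0 \<noteq> 0\<^sub>v n" "T *\<^sub>v \<zeta>0 = l \<cdot>\<^sub>v \<zeta>0"
    unfolding eigenvector_def using T by auto
  define \<zeta> where "\<zeta> = complex_of_real (1 / sqrt (sqnorm \<zeta>0)) \<cdot>\<^sub>v \<zeta>0"
  have \<zeta>: "\<zeta> \<in> carrier_vec n" unfolding \<zeta>_def using \<zeta>0 by simp
  have "sqnorm \<zeta>0 > 0" using sqnorm_pos_iff[OF \<zeta>0(1)] \<zeta>0(2) by simp
  hence unit: "sqnorm \<zeta> = 1" unfolding \<zeta>_def sqnorm_smult by (simp add: norm_divide power_divide)
  hence \<zeta>_ne: "\<zeta> \<noteq> 0\<^sub>v n" using sqnorm_eq_0_iff[OF \<zeta>] by auto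
  have "path_apply (A, B, n) q d \<zeta> = l \<cdot>\<^sub>v \<zeta>"
    using pow[OF \<zeta>, of 1] mult_mat_vec[OF T \<zeta>0(1)] \<zeta>0(3) T
    unfolding \<zeta>_def by (simp add: smult_smult_assoc mult.commute)
  moreover have "contained_in_ray (A, B, n) \<zeta> q"
    using contained_in_periodic_ray_if_eigenvector[OF pm d per \<zeta> \<zeta>_ne calculation l] .
  ultimately show ?thesis using that \<zeta> unit l by blast
qed

lemma intertwiner_range_submodule:
  assumes U: "U \<in> carrier_mat n d" and AB: "A \<in> carrier_mat n n" "B \<in> carrier_mat n n"
    and XY: "X \<in> carrier_mat d d" "Y \<in> carrier_mat d d"
    and UX: "U * X = A * U" and UY: "U * Y = B * U"
  shows "is_submodule (A, B, n) {U *\<^sub>v y | y. y \<in> carrier_vec d}"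
  unfolding is_submodule_def is_subspace_def prod.case
proof (intro conjI ballI allI)
  let ?R = "{U *\<^sub>v y | y. y \<in> carrier_vec d}"
  show "?R \<subseteq> carrier_vec n" using U by auto
  have "U *\<^sub>v 0\<^sub>v d = 0\<^sub>v n" using U by (intro eq_vecI) auto
  thus "0\<^sub>v n \<in> ?R" by (metis (mono_tags, lifting) mem_Collect_eq zero_carrier_vec)
  fix u v assume "u \<in> ?R" "v \<in> ?R"
  then obtain x y where "u = U *\<^sub>v x" "v = U *\<^sub>v y" "x \<in> carrier_vec d" "y \<in> carrier_vec d" by auto
  thus "u + v \<in> ?R" using U by (intro CollectI exI[of _ "x + y"]) (auto simp: mult_add_distrib_mat_vec)
next
  let ?R = "{U *\<^sub>v y | y. y \<in> carrier_vec d}"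
  fix c v assume "v \<in> ?R"
  then obtain y where "v = U *\<^sub>v y" "y \<in> carrier_vec d" by auto
  thus "c \<cdot>\<^sub>v v \<in> ?R" using U by (intro CollectI exI[of _ "c \<cdot>\<^sub>v y"]) (auto simp: mult_mat_vec)
next
  let ?R = "{U *\<^sub>v y | y. y \<in> carrier_vec d}"
  fix v assume "v \<in> ?R"
  then obtain y where v: "v = U *\<^sub>v y" "y \<in> carrier_vec d" by auto
  have "A *\<^sub>v v = (U * X) *\<^sub>v y"
    unfolding v(1) UX by (rule assoc_mult_mat_vec[symmetric, OF AB(1) U v(2)])
  also have "\<dots> = U *\<^sub>v (X *\<^sub>v y)" by (rule assoc_mult_mat_vec[OF U XY(1) v(2)])
  finally have "A *\<^sub>v v = U *\<^sub>v (X *\<^sub>v y)" .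
  thus "A *\<^sub>v v \<in> ?R" using XY v by auto
  have "B *\<^sub>v v = (U * Y) *\<^sub>v y"
    unfolding v(1) UY by (rule assoc_mult_mat_vec[symmetric, OF AB(2) U v(2)])
  also have "\<dots> = U *\<^sub>v (Y *\<^sub>v y)" by (rule assoc_mult_mat_vec[OF U XY(2) v(2)])
  finally have "B *\<^sub>v v = U *\<^sub>v (Y *\<^sub>v y)" .
  thus "B *\<^sub>v v \<in> ?R" using XY v by auto
qed

locale periodic_orbit = ray_orbit A B n q \<zeta> + prime_cycle_module w l d
  for A B n q \<zeta> w l d +
  assumes q_word: "\<And>t. q t = w ! (t mod d)"
    and monodromy: "orb d = l \<cdot>\<^sub>v \<zeta>"
    and unit: "sqnorm \<zeta> = 1"
begin

definition orbit_mat :: "complex mat" where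
  "orbit_mat = mat n d (\<lambda>(r, j). orb j $ r)"

lemma orbit_mat_carrier: "orbit_mat \<in> carrier_mat n d"
  unfolding orbit_mat_def by simp

lemma orb_orthonormal:
  assumes "i < d" "j < d"
  shows "orb i \<bullet>c orb j = (if i = j then 1 else 0)"
proof (cases "i = j")
  case True
  thus ?thesis using orb_sqnorm unit cscalar_prod_self by simp
next
  case False
  have "\<exists>t. q (i + t) \<noteq> q (j + t)"
  proof (rule ccontr)
    assume "\<not> (\<exists>t. q (i + t) \<noteq> q (j + t))"
    hence "\<forall>t<d. w ! ((i + t) mod d) = w ! ((j + t) mod d)" using q_word by auto
    thus False using prime_word_shift_inj[OF prime length_w assms] False by simp
  qed
  thus ?thesis using orb_orthogonal False by simp
qed

lemma adj_orbit_mat_mult: "adj orbit_mat * orbit_mat = 1\<^sub>m d"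
proof (rule eq_matI)
  fix a b assume "a < dim_row (1\<^sub>m d)" "b < dim_col (1\<^sub>m d)"
  hence ab: "a < d" "b < d" by auto
  have "(adj orbit_mat * orbit_mat) $$ (a, b) = (\<Sum>r\<in>{0..<n}. orb b $ r * cnj (orb a $ r))"
    using ab orbit_mat_carrier orb_carrier[of a] orb_carrier[of b]
    by (auto simp: scalar_prod_def orbit_mat_def mult.commute intro!: sum.cong)
  also have "\<dots> = orb b \<bullet>c orb a" using orb_carrier[of a] orb_carrier[of b] by (simp add: scalar_prod_def)
  finally show "(adj orbit_mat * orbit_mat) $$ (a, b) = 1\<^sub>m d $$ (a, b)"
    using orb_orthonormal[OF ab(2,1)] ab by auto
qed (use orbit_mat_carrier in auto)

lemma orbit_mat_intertwines: "orbit_mat * X x = (if x then B else A) * orbit_mat"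
proof (rule eq_matI)
  fix r j assume "r < dim_row ((if x then B else A) * orbit_mat)" "j < dim_col ((if x then B else A) * orbit_mat)"
  hence r: "r < n" and j: "j < d" using carrier_AB orbit_mat_carrier by (auto split: if_splits)
  have "(orbit_mat * X x) $$ (r, j) = (\<Sum>k\<in>{0..<d}. orb k $ r * (if k = Suc j mod d \<and> w ! j = x then weight w l j else 0))"
    using r j orbit_mat_carrier by (auto simp: scalar_prod_def orbit_mat_def X_index intro!: sum.cong)
  also have "\<dots> = (if w ! j = x then orb (Suc j mod d) $ r * weight w l j else 0)"
    by (rule sum_mult_if_single) (use d in simp)
  \<comment> \<open>the last edge of the cycle carries the monodromy l\<close>
  also have "\<dots> = (if q j = x then orb (Suc j) $ r else 0)"
  proof (cases "Suc j < d")
    case False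
    hence "Suc j = d" using j by simp
    thus ?thesis using q_word j monodromy orb_carrier[of 0] r length_w
      by (auto simp: weight_def orb_def mult.commute)
  qed (use q_word j length_w in \<open>auto simp: weight_def\<close>)
  also have "\<dots> = ((if x then B else A) *\<^sub>v orb j) $ r"
    using orb_step[of x j] r by auto
  also have "\<dots> = ((if x then B else A) * orbit_mat) $$ (r, j)"
    using r j carrier_AB orbit_mat_carrier orb_carrier[of j]
    by (auto simp: orbit_mat_def scalar_prod_def intro!: sum.cong)
  finally show "(orbit_mat * X x) $$ (r, j) = ((if x then B else A) * orbit_mat) $$ (r, j)" .
qed (use carrier_AB orbit_mat_carrier X_carrier in auto)

lemma orbit_mat_unit_vec: "orbit_mat *\<^sub>v unit_vec d 0 = \<zeta>"
  using orbit_mat_carrier orb_carrier[of 0] \<zeta> d by (intro eq_vecI) (auto simp: orbit_mat_def orb_def)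


lemma unit_equiv_if_simple:
  assumes simple: "\<And>V. is_submodule (A, B, n) V \<Longrightarrow> V = {0\<^sub>v n} \<or> V = carrier_vec n"
  shows "unit_equiv M (A, B, n)"
proof -
  let ?R = "{orbit_mat *\<^sub>v y | y. y \<in> carrier_vec d}"
  have sub: "is_submodule (A, B, n) ?R"
    using orbit_mat_intertwines[of False] orbit_mat_intertwines[of True]
    by (intro intertwiner_range_submodule[OF orbit_mat_carrier carrier_AB X_carrier X_carrier]) simp_all
  have "\<zeta> \<in> ?R" using orbit_mat_unit_vec[symmetric] unit_vec_carrier[of d 0] by blast
  moreover have "\<zeta> \<noteq> 0\<^sub>v n"
  proof
    assume "\<zeta> = 0\<^sub>v n"
    hence "sqnorm \<zeta> = 0" using sqnorm_eq_0_iff[OF \<zeta>] by blast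
    thus False using unit by simp
  qed
  ultimately have "?R \<noteq> {0\<^sub>v n}" by blast
  hence R: "?R = carrier_vec n" using simple[OF sub] by blast
  have "\<exists>x\<in>carrier_vec d. y = orbit_mat *\<^sub>v x" if "y \<in> carrier_vec n" for y
  proof -
    have "y \<in> ?R" using that unfolding R .
    thus ?thesis by blast
  qed
  note onto_unitary = isometry_onto_unitary[OF orbit_mat_carrier adj_orbit_mat_mult this]
  have "orbit_mat * X False = A * orbit_mat" "orbit_mat * X True = B * orbit_mat"
    using orbit_mat_intertwines[of False] orbit_mat_intertwines[of True] by simp_all
  thus "unit_equiv M (A, B, n)"
    unfolding M_eq unit_equiv_def prod.case using onto_unitary by (intro conjI exI[of _ orbit_mat]) simp_all
qed

end

lemma irreducible_periodic_ray_unit_equiv: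
  assumes irr: "irreducible_pmod (A, B, n)" and w: "prime_word w"
    and q: "\<And>t. q t = w ! (t mod length w)"
    and \<xi>: "\<xi> \<in> carrier_vec n" "contained_in_ray (A, B, n) \<xi> q"
  obtains \<phi> where "cmod \<phi> = 1" "unit_equiv (m_wphi w \<phi>) (A, B, n)"
proof -
  define d where "d = length w"
  have pm: "is_pmodule (A, B, n)"
    and simple: "\<And>V. is_submodule (A, B, n) V \<Longrightarrow> V = {0\<^sub>v n} \<or> V = carrier_vec n"
    using irr unfolding irreducible_pmod_def by auto
  have d: "0 < d" using w unfolding prime_word_def d_def by simp
  obtain \<zeta> l where \<zeta>_carrier: "\<zeta> \<in> carrier_vec n" and \<zeta>_unit: "sqnorm \<zeta> = 1" and l: "cmod l = 1"
    and contained: "contained_in_ray (A, B, n) \<zeta> q" and ret: "path_apply (A, B, n) q d \<zeta> = l \<cdot>\<^sub>v \<zeta>"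
    using unimodular_eigenvector_on_periodic_ray[OF pm d _ \<xi>] q unfolding d_def by auto
  interpret ray_orbit A B n q \<zeta> using pm \<zeta>_carrier contained by unfold_locales
  have "orb d = l \<cdot>\<^sub>v \<zeta>" using ret unfolding orb_def .
  then interpret periodic_orbit A B n q \<zeta> w l d
    using \<zeta>_unit l w d q unfolding d_def by unfold_locales auto
  have "unit_equiv M (A, B, n)" by (rule unit_equiv_if_simple[OF simple])
  thus ?thesis using that l by blast
qed

lemma irr_atomic_unit_equiv_m_wphi:
  assumes W: "representatives W" and M: "irr_atomic M"
  obtains w \<phi> where "w \<in> W" "\<phi> \<in> S1" "unit_equiv (m_wphi w \<phi>) M"
proof -
  obtain A B n where M_eq: "M = (A, B, n)" by (metis prod.exhaust)
  have irr: "irreducible_pmod (A, B, n)" and pm: "is_pmodule (A, B, n)"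
    using M unfolding M_eq irr_atomic_def by auto
  obtain \<xi> p where \<xi>: "\<xi> \<in> carrier_vec n" "periodic_ray p" "contained_in_ray (A, B, n) \<xi> p"
    using irr_atomic_periodic_contained M unfolding M_eq by blast
  then obtain w i where w: "w \<in> W" "\<And>t. p (t + i) = w ! (t mod length w)"
    using periodic_ray_representative[OF W] by blast
  have "prime_word w" using W w(1) unfolding representatives_def by blast
  then obtain \<phi> where "cmod \<phi> = 1" "unit_equiv (m_wphi w \<phi>) (A, B, n)"
    using irreducible_periodic_ray_unit_equiv[OF irr _ w(2)]
      path_apply_carrier[OF pmodule_carrier[OF pm] \<xi>(1)] contained_in_ray_path_apply[OF pm \<xi>(1,3)]
    by blast
  thus ?thesis using that w(1) unfolding M_eq S1_def by blast
qed

lemma m_wphi_irr_atomic: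
  assumes "prime_word w" and "cmod \<phi> = 1" shows "irr_atomic (m_wphi w \<phi>)"
proof -
  have "0 < length w" using assms(1) unfolding prime_word_def by simp
  then interpret prime_cycle_module w \<phi> "length w" using assms by unfold_locales auto
  show ?thesis unfolding irr_atomic_def using M_is_pmodule M_irreducible M_atomic by simp
qed

theorem corollary2p19:
  assumes "representatives W"
  shows "bij_betw (\<lambda>(w, \<phi>). ue_rel `` {m_wphi w \<phi>}) (W \<times> S1)
           ({M. irr_atomic M} // ue_rel)"
proof -
  have irr_atomic: "irr_atomic (m_wphi w \<phi>)" if "w \<in> W" "\<phi> \<in> S1" for w \<phi>
    using m_wphi_irr_atomic assms that unfolding representatives_def S1_def by auto
  have "inj_on (\<lambda>(w, \<phi>). ue_rel `` {m_wphi w \<phi>}) (W \<times> S1)"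
  proof (rule inj_onI, clarify)
    fix w \<phi> w' \<phi>' assume ws: "w \<in> W" "\<phi> \<in> S1" "w' \<in> W" "\<phi>' \<in> S1"
      and "ue_rel `` {m_wphi w \<phi>} = ue_rel `` {m_wphi w' \<phi>'}"
    hence "unit_equiv (m_wphi w \<phi>) (m_wphi w' \<phi>')"
      using eq_equiv_class_iff[OF equiv_ue_rel] irr_atomic unfolding ue_rel_def by blast
    thus "w = w' \<and> \<phi> = \<phi>'"
      using m_wphi_unit_equiv_imp_eq[OF assms ws(1,3)] ws(2,4) unfolding S1_def by auto
  qed
  moreover have "(\<lambda>(w, \<phi>). ue_rel `` {m_wphi w \<phi>}) ` (W \<times> S1) = {M. irr_atomic M} // ue_rel"
  proof (intro equalityI subsetI)
    fix C assume "C \<in> {M. irr_atomic M} // ue_rel"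
    then obtain M where C: "C = ue_rel `` {M}" and M: "irr_atomic M" by (auto elim: quotientE)
    then obtain w \<phi> where w: "w \<in> W" "\<phi> \<in> S1" and "unit_equiv (m_wphi w \<phi>) M"
      using irr_atomic_unit_equiv_m_wphi[OF assms] by blast
    hence "ue_rel `` {m_wphi w \<phi>} = C"
      unfolding C using equiv_class_eq[OF equiv_ue_rel] irr_atomic[OF w] M unfolding ue_rel_def by blast
    thus "C \<in> (\<lambda>(w, \<phi>). ue_rel `` {m_wphi w \<phi>}) ` (W \<times> S1)" using w by force
  qed (use irr_atomic in \<open>auto intro: quotientI\<close>)
  ultimately show ?thesis unfolding bij_betw_def by blast
qed

end
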